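(* Let $C_w$ be a cell of $\mathcal{SG}$ with $C_w\cap V_0=\emptyset$, boundary points $p_i=F_wq_i$. Then for every harmonic function $h$ on $\mathcal{SG}$, $$M_{B(0,0,1)}(h)=h(p_2),\qquad M_{B(0,1,1)}(h)=-\tfrac19h(p_0)+\tfrac59h(p_1)+\tfrac59h(p_2).$$ In other words $T(0,0,1)=P_2=(0,0,1)$ and $T(0,1,1)=Q_0=(-\frac19,\frac59,\frac59)$, a point of the plane $\{a_0+a_1+a_2=1\}$ lying outside the triangle $W$ with vertices $(1,0,0),(0,1,0),(0,0,1)$.
   Context: Let $q_0,q_1,q_2$ be the vertices of an equilateral triangle in $\mathbb{R}^2$ and $F_i(z)=\frac12(z+q_i)$. The Sierpinski gasket $\mathcal{SG}$ is the unique nonempty compact set with $\mathcal{SG}=\bigcup_{i=0}^2F_i(\mathcal{SG})$. For $w\in\{0,1,2\}^m$, $F_w=F_{w_1}\circ\cdots\circ F_{w_m}$ and $C_w=F_w(\mathcal{SG})$ is an $m$-cell. $V_0=\{q_0,q_1,q_2\}$, $V_m=\bigcup_{|w|=m}F_w(V_0)$, $x\sim_my$ means $x\ne y$ lie in a common $F_w(V_0)$, $|w|=m$. $\mu$ is the self-similar probability measure giving mass $3^{-m}$ to each $m$-cell. A continuous $h$ is harmonic if $h(x)=\frac14\sum_{y\sim_mx}h(y)$ for all $m\ge1$, $x\in V_m\setminus V_0$. $M_B(h)=\frac1{\mu(B)}\int_Bh\,d\mu$. For $C_w$ as in the claim: $C_i$ is the unique other cell of the same level containing $p_i$; $\rho$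 is the height of the triangle $F_w(\mathrm{conv}\,V_0)$; for $c_i\in[0,1]$, with $u_i$ the unit vector at $p_i$ along the symmetry axis of the triangle of $C_i$ pointing into $C_i$, $E_i=\{z\in C_i:\langle z-p_i,u_i\rangle\le c_i\rho\}$, and $B(c_0,c_1,c_2)=C_w\cup E_0\cup E_1\cup E_2$ (so $B(0,0,1)=C_w\cup C_2$ and $B(0,1,1)=C_w\cup C_1\cup C_2$ up to null sets). $T(c_0,c_1,c_2)$ denotes the unique $(a_0,a_1,a_2)$ with $M_{B(c_0,c_1,c_2)}(h)=\sum a_ih(p_i)$ for all harmonic $h$. *)

theory Defs
  imports "HOL-Probability.Probability"
begin

text \<open>The plane is modelled as the type complex; the Euclidean inner product is
  the real inner product on complex. The vertices are q 0, q 1, q 2.\<close>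

definition equilateral :: "(nat \<Rightarrow> complex) \<Rightarrow> bool" where
  "equilateral q \<longleftrightarrow> q 0 \<noteq> q 1 \<and> dist (q 0) (q 1) = dist (q 1) (q 2)
      \<and> dist (q 1) (q 2) = dist (q 2) (q 0)"

definition sgF :: "(nat \<Rightarrow> complex) \<Rightarrow> nat \<Rightarrow> complex \<Rightarrow> complex" where
  "sgF q i z = (z + q i) / 2"

definition words :: "nat \<Rightarrow> nat list set" where
  "words m = {w. length w = m \<and> set w \<subseteq> {0,1,2}}"

fun sgFw :: "(nat \<Rightarrow> complex) \<Rightarrow> nat list \<Rightarrow> complex \<Rightarrow> complex" where
  "sgFw q [] = id"
| "sgFw q (i # w) = sgF q i \<circ> sgFw q w"

definition SG :: "(nat \<Rightarrow> complex) \<Rightarrow> complex set" where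
  "SG q = (THE K. K \<noteq> {} \<and> compact K \<and> K = (\<Union>i\<in>{0,1,2}. sgF q i ` K))"

definition cell :: "(nat \<Rightarrow> complex) \<Rightarrow> nat list \<Rightarrow> complex set" where
  "cell q w = sgFw q w ` SG q"

definition V0 :: "(nat \<Rightarrow> complex) \<Rightarrow> complex set" where
  "V0 q = {q 0, q 1, q 2}"

definition Vm :: "(nat \<Rightarrow> complex) \<Rightarrow> nat \<Rightarrow> complex set" where
  "Vm q m = (\<Union>w\<in>words m. sgFw q w ` V0 q)"

definition sg_adj :: "(nat \<Rightarrow> complex) \<Rightarrow> nat \<Rightarrow> complex \<Rightarrow> complex \<Rightarrow> bool" where
  "sg_adj q m x y \<longleftrightarrow> x \<noteq> y \<and> (\<exists>w\<in>words m. x \<in> sgFw q w ` V0 q \<and> y \<in> sgFw q w ` V0 q)"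

definition harmonic :: "(nat \<Rightarrow> complex) \<Rightarrow> (complex \<Rightarrow> real) \<Rightarrow> bool" where
  "harmonic q h \<longleftrightarrow> continuous_on (SG q) h \<and>
     (\<forall>m\<ge>1. \<forall>x \<in> Vm q m - V0 q. h x = (1/4) * (\<Sum>y\<in>{y. sg_adj q m x y}. h y))"

definition sg_measure :: "(nat \<Rightarrow> complex) \<Rightarrow> complex measure \<Rightarrow> bool" where
  "sg_measure q \<mu> \<longleftrightarrow> prob_space \<mu> \<and> sets \<mu> = sets borel \<and>
     (\<forall>m. \<forall>w\<in>words m. measure \<mu> (cell q w) = (1/3) ^ m)"

definition mean_val :: "complex measure \<Rightarrow> complex set \<Rightarrow> (complex \<Rightarrow> real) \<Rightarrow> real" where
  "mean_val \<mu> B h = (1 / measure \<mu> B) * (LINT x:B|\<mu>. h x)"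

definition nbr_word :: "(nat \<Rightarrow> complex) \<Rightarrow> nat list \<Rightarrow> nat \<Rightarrow> nat list" where
  "nbr_word q w i = (THE v. v \<in> words (length w) \<and> v \<noteq> w \<and> sgFw q w (q i) \<in> cell q v)"

definition height :: "(nat \<Rightarrow> complex) \<Rightarrow> nat list \<Rightarrow> real" where
  "height q w = sqrt 3 / 2 * dist (sgFw q w (q 0)) (sgFw q w (q 1))"

text \<open>Unit vector at p_i along the symmetry axis of the triangle of C_i, pointing into C_i
  (i.e. towards the centroid of that triangle).\<close>
definition axis_vec :: "(nat \<Rightarrow> complex) \<Rightarrow> nat list \<Rightarrow> nat \<Rightarrow> complex" where
  "axis_vec q w i = (let v = nbr_word q w i; p = sgFw q w (q i);
      c = (sgFw q v (q 0) + sgFw q v (q 1) + sgFw q v (q 2)) / 3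
    in (c - p) / of_real (norm (c - p)))"

definition Eset :: "(nat \<Rightarrow> complex) \<Rightarrow> nat list \<Rightarrow> nat \<Rightarrow> real \<Rightarrow> complex set" where
  "Eset q w i c = {z \<in> cell q (nbr_word q w i).
      inner (z - sgFw q w (q i)) (axis_vec q w i) \<le> c * height q w}"

definition Bset :: "(nat \<Rightarrow> complex) \<Rightarrow> nat list \<Rightarrow> real \<Rightarrow> real \<Rightarrow> real \<Rightarrow> complex set" where
  "Bset q w c0 c1 c2 = cell q w \<union> Eset q w 0 c0 \<union> Eset q w 1 c1 \<union> Eset q w 2 c2"

end

theory Submission
  imports Defs
begin

text \<open>Harmonic functions obey the \<open>2/5\<close>-rule: at the junction \<open>F\<^sub>w F\<^sub>a q\<^sub>b\<close> of two children of
  \<open>C\<^sub>w\<close> the value is \<open>(2 h(p\<^sub>a) + 2 h(p\<^sub>b) + h(p\<^sub>c)) / 5\<close>. Consequently the vertex sum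
  \<open>S(w) = h(p\<^sub>0) + h(p\<^sub>1) + h(p\<^sub>2)\<close> satisfies \<open>S(w0) + S(w1) + S(w2) = 3 S(w)\<close>, and as cells shrink
  the integral of \<open>h\<close> over an \<open>m\<close>-cell is \<open>3\<^sup>-\<^sup>m S(w) / 3\<close>. If \<open>w = u j i\<^sup>r\<close>, the neighbour of
  \<open>C\<^sub>w\<close> at \<open>p\<^sub>i\<close> is \<open>C\<^sub>v\<close> with \<open>v = u i j\<^sup>r\<close>, and induction on \<open>r\<close> gives \<open>S(w) + S(v) = 6 h(p\<^sub>i)\<close>.
  The distance along the symmetry axis is affine in the barycentric coordinates of \<open>C\<^sub>v\<close>, so
  \<open>E\<^sub>i\<close> is the single point \<open>p\<^sub>i\<close> for \<open>c\<^sub>i = 0\<close> and all of \<open>C\<^sub>i\<close> for \<open>c\<^sub>i = 1\<close>. Distinct cells of one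
  level meet in at most one point, a null set, so \<open>B(0,0,1)\<close> and \<open>B(0,1,1)\<close> are unions of two and
  three cells, and their means are \<open>(I\<^sub>w + I\<^sub>2) / 2\<close> and \<open>((I\<^sub>w + I\<^sub>1) + (I\<^sub>w + I\<^sub>2) - I\<^sub>w) / 3\<close> in units of
  \<open>3\<^sup>-\<^sup>m\<close>, i.e. \<open>h(p\<^sub>2)\<close> and \<open>(2 h(p\<^sub>1) + 2 h(p\<^sub>2) - S(w)/3) / 3\<close>.\<close>

lemma third_index:
  assumes "a \<in> {0,1,2}" "b \<in> {0,1,2}" "a \<noteq> b"
  obtains c :: nat where "c \<in> {0,1,2}" "c \<noteq> a" "c \<noteq> b"
proof
  show "3 - a - b \<in> {0,1,2}" "3 - a - b \<noteq> a" "3 - a - b \<noteq> b"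
    using assms by (elim insertE emptyE; simp)+
qed

lemma three_indices_eq:
  assumes "a \<in> {0,1,2}" "b \<in> {0,1,2}" "c \<in> {0,1,2}" "a \<noteq> b" "a \<noteq> c" "b \<noteq> c"
  shows "{a, b, c} = {0::nat,1,2}"
  using assms by (intro card_subset_eq) auto

lemma sum_three_distinct:
  fixes f :: "nat \<Rightarrow> 'a::comm_monoid_add"
  assumes "a \<in> {0,1,2}" "b \<in> {0,1,2}" "c \<in> {0,1,2}" "a \<noteq> b" "a \<noteq> c" "b \<noteq> c"
  shows "f a + f b + f c = f 0 + f 1 + f 2"
proof -
  have "f a + f b + f c = (\<Sum>k\<in>{a,b,c}. f k)" using assms(4-) by (simp add: add.assoc)
  also have "\<dots> = f 0 + f 1 + f 2" unfolding three_indices_eq[OF assms] by (simp add: add.assoc)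
  finally show ?thesis .
qed

lemma V0_eq_image: "V0 q = q ` {0,1,2}"
  unfolding V0_def by simp

section \<open>Barycentric coordinates\<close>

text \<open>Twice the oriented area of the triangle \<open>a b c\<close>.\<close>
definition signed_area :: "complex \<Rightarrow> complex \<Rightarrow> complex \<Rightarrow> real" where
  "signed_area a b c = Im (cnj (b - a) * (c - a))"

lemma signed_area_affine:
  assumes "u + v = 1"
  shows "signed_area (of_real u * x + of_real v * y) b c = u * signed_area x b c + v * signed_area y b c"
proof -
  have v: "v = 1 - u" using assms by simp
  show ?thesis unfolding signed_area_def v by (simp add: algebra_simps)
qed

lemma signed_area_midpoint:
  "signed_area ((x + y) / 2) b c = (signed_area x b c + signed_area y b c) / 2"
  using signed_area_affine[of "1/2" "1/2" x y b c] by (simp add: field_simps)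

lemma signed_area_sq_plus_inner_sq:
  "(signed_area a b c)\<^sup>2 + (inner (b - a) (c - a))\<^sup>2 = (norm (b - a) * norm (c - a))\<^sup>2"
proof -
  have "(norm (b - a) * norm (c - a))\<^sup>2 = (cmod (cnj (b - a) * (c - a)))\<^sup>2"
    by (simp add: norm_mult flip: complex_cnj_diff)
  also have "\<dots> = (Im (cnj (b - a) * (c - a)))\<^sup>2 + (Re (cnj (b - a) * (c - a)))\<^sup>2"
    by (simp add: cmod_power2 add.commute)
  also have "Re (cnj (b - a) * (c - a)) = inner (b - a) (c - a)"
    by (simp add: inner_complex_def algebra_simps)
  finally show ?thesis by (simp add: signed_area_def)
qed

lemma equilateral_nondegenerate:
  assumes "equilateral q"
  shows "signed_area (q 0) (q 1) (q 2) \<noteq> 0"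
proof
  define s where "s = norm (q 1 - q 0)"
  have sides: "norm (q 2 - q 0) = s" "norm ((q 1 - q 0) - (q 2 - q 0)) = s"
    using assms unfolding equilateral_def s_def by (simp_all add: dist_norm norm_minus_commute)
  have "s > 0" using assms unfolding equilateral_def s_def by auto
  have inner: "inner (q 1 - q 0) (q 2 - q 0) = s\<^sup>2 / 2"
    using dot_norm_neg[of "q 1 - q 0" "q 2 - q 0"] sides s_def by simp
  assume "signed_area (q 0) (q 1) (q 2) = 0"
  moreover have "(signed_area (q 0) (q 1) (q 2))\<^sup>2 + (s\<^sup>2 / 2)\<^sup>2 = (s * s)\<^sup>2"
    using signed_area_sq_plus_inner_sq[of "q 0" "q 1" "q 2"] unfolding inner sides(1) s_def[symmetric] .
  ultimately have "s ^ 4 = 0" by (simp add: power2_eq_square field_simps)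
  with \<open>s > 0\<close> show False by simp
qed

locale sg_triangle =
  fixes q :: "nat \<Rightarrow> complex"
  assumes nondegenerate: "signed_area (q 0) (q 1) (q 2) \<noteq> 0"
begin

definition bary :: "nat \<Rightarrow> complex \<Rightarrow> real" where
  "bary k z = (if k = 0 then signed_area z (q 1) (q 2) else if k = 1 then signed_area z (q 2) (q 0)
     else signed_area z (q 0) (q 1)) / signed_area (q 0) (q 1) (q 2)"

lemma bary_sum: "bary 0 z + bary 1 z + bary 2 z = 1"
proof -
  have "signed_area z (q 1) (q 2) + signed_area z (q 2) (q 0) + signed_area z (q 0) (q 1)
      = signed_area (q 0) (q 1) (q 2)"
    unfolding signed_area_def by (simp add: algebra_simps)
  then show ?thesis unfolding bary_def using nondegenerate by (simp add: field_simps)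
qed

lemma bary_reconstruct: "z = of_real (bary 0 z) * q 0 + of_real (bary 1 z) * q 1 + of_real (bary 2 z) * q 2"
proof -
  let ?A = "signed_area (q 0) (q 1) (q 2)"
  have "Re z * ?A = signed_area z (q 1) (q 2) * Re (q 0) + signed_area z (q 2) (q 0) * Re (q 1)
          + signed_area z (q 0) (q 1) * Re (q 2)"
       "Im z * ?A = signed_area z (q 1) (q 2) * Im (q 0) + signed_area z (q 2) (q 0) * Im (q 1)
          + signed_area z (q 0) (q 1) * Im (q 2)"
    unfolding signed_area_def by (simp_all add: algebra_simps)
  then show ?thesis using nondegenerate unfolding bary_def by (simp add: complex_eq_iff field_simps)
qed

lemma bary_inject:
  assumes "\<And>k. k \<in> {0,1,2} \<Longrightarrow> bary k x = bary k y"
  shows "x = y"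
proof -
  have "bary 0 x = bary 0 y" "bary 1 x = bary 1 y" "bary 2 x = bary 2 y" using assms by simp_all
  then show ?thesis by (metis bary_reconstruct)
qed

lemma bary_vertex:
  assumes "j \<in> {0,1,2}" "k \<in> {0,1,2}"
  shows "bary k (q j) = (if k = j then 1 else 0)"
proof -
  let ?A = "signed_area (q 0) (q 1) (q 2)"
  have rot: "signed_area (q 1) (q 2) (q 0) = ?A" "signed_area (q 2) (q 0) (q 1) = ?A"
    unfolding signed_area_def by (simp_all add: algebra_simps)
  have degenerate: "signed_area x x c = 0" "signed_area x b x = 0" for x b c
    unfolding signed_area_def by simp_all
  have "bary 0 (q 0) = 1" "bary 1 (q 0) = 0" "bary 2 (q 0) = 0"
       "bary 0 (q 1) = 0" "bary 1 (q 1) = 1" "bary 2 (q 1) = 0"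
       "bary 0 (q 2) = 0" "bary 1 (q 2) = 0" "bary 2 (q 2) = 1"
    unfolding bary_def rot degenerate using nondegenerate by simp_all
  with assms show ?thesis by (elim insertE emptyE) simp_all
qed

lemma vertex_inj: "j \<in> {0,1,2} \<Longrightarrow> k \<in> {0,1,2} \<Longrightarrow> q j = q k \<Longrightarrow> j = k"
  using bary_vertex by (metis one_neq_zero)

lemma bary_affine:
  "u + v = 1 \<Longrightarrow> bary k (of_real u * x + of_real v * y) = u * bary k x + v * bary k y"
  unfolding bary_def by (simp add: signed_area_affine add_divide_distrib)

lemma bary_midpoint: "bary k ((x + y) / 2) = (bary k x + bary k y) / 2"
  unfolding bary_def signed_area_midpoint by (simp add: add_divide_distrib)

lemma bary_sgF:
  "a \<in> {0,1,2} \<Longrightarrow> k \<in> {0,1,2} \<Longrightarrow> bary k (sgF q a z) = (bary k z + (if k = a then 1 else 0)) / 2"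
  unfolding sgF_def by (simp add: bary_midpoint bary_vertex)

definition triangle :: "complex set" where
  "triangle = {z. \<forall>k\<in>{0,1,2}. 0 \<le> bary k z}"

lemma convex_triangle: "convex triangle"
proof (rule convexI)
  fix x y :: complex and u v :: real
  assume "x \<in> triangle" "y \<in> triangle" "0 \<le> u" "0 \<le> v" "u + v = 1"
  then show "u *\<^sub>R x + v *\<^sub>R y \<in> triangle"
    unfolding triangle_def by (auto simp: scaleR_conv_of_real bary_affine)
qed

lemma convex_hull_V0_subset_triangle: "convex hull (V0 q) \<subseteq> triangle"
proof (rule hull_minimal)
  show "V0 q \<subseteq> triangle" by (auto simp: V0_def triangle_def bary_vertex)
qed (rule convex_triangle)

lemma bary_le_1: "z \<in> triangle \<Longrightarrow> k \<in> {0,1,2} \<Longrightarrow> bary k z \<le> 1"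
  using bary_sum[of z] unfolding triangle_def by auto

lemma bary_eq_1_imp_vertex:
  assumes "z \<in> triangle" "b \<in> {0,1,2}" "bary b z = 1"
  shows "z = q b"
proof (rule bary_inject)
  fix k :: nat assume k: "k \<in> {0,1,2}"
  show "bary k z = bary k (q b)"
  proof (cases "k = b")
    case False
    then obtain c where c: "c \<in> {0,1,2}" "c \<noteq> b" "c \<noteq> k"
      using third_index[OF assms(2) k] by metis
    have "bary b z + bary k z + bary c z = 1"
      using sum_three_distinct[OF assms(2) k c(1), of "\<lambda>k. bary k z"] c False bary_sum[of z] by auto
    moreover have "0 \<le> bary k z" "0 \<le> bary c z" using assms(1) k c(1) unfolding triangle_def by auto
    ultimately have "bary k z = 0" using assms(3) by linarith
    then show ?thesis using False by (simp add: bary_vertex[OF assms(2) k])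
  qed (simp add: assms(3) bary_vertex[OF assms(2,2)])
qed

end

section \<open>Words and the contractions \<open>F\<^sub>w\<close>\<close>

lemma sgF_inj: "sgF q a x = sgF q a y \<Longrightarrow> x = y"
  unfolding sgF_def by simp

lemma sgF_vertex_comm: "sgF q a (q b) = sgF q b (q a)"
  by (simp add: sgF_def add.commute)

lemma sgF_vertex_fixed: "sgF q a (q a) = q a"
  unfolding sgF_def by simp

lemma continuous_on_sgF: "continuous_on S (sgF q i)"
  unfolding sgF_def by (intro continuous_intros) auto

lemma sgFw_append: "sgFw q (w @ v) = sgFw q w \<circ> sgFw q v"
  by (induction w) auto

lemma sgFw_snoc: "sgFw q (u @ [a]) z = sgFw q u (sgF q a z)"
  by (simp add: sgFw_append)

lemma sgFw_replicate_vertex: "sgFw q (replicate r a) (q a) = q a"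
  by (induction r) (auto simp: sgF_vertex_fixed)

lemma sgFw_diff: "sgFw q w x - sgFw q w y = (x - y) / 2 ^ length w"
proof (induction w)
  case (Cons a w)
  have "sgFw q (a # w) x - sgFw q (a # w) y = (sgFw q w x - sgFw q w y) / 2"
    by (simp add: sgF_def field_simps)
  then show ?case using Cons by simp
qed simp

lemma sgFw_diff_scaleR: "sgFw q w x - sgFw q w y = (1 / 2 ^ length w) *\<^sub>R (x - y)"
  by (simp add: sgFw_diff scaleR_conv_of_real divide_inverse mult.commute)

lemma dist_sgFw: "dist (sgFw q w x) (sgFw q w y) = dist x y / 2 ^ length w"
  by (simp add: dist_norm sgFw_diff_scaleR)

lemma sgFw_inj: "sgFw q w x = sgFw q w y \<Longrightarrow> x = y"
  using sgFw_diff[of q w x y] by simp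

lemma sgFw_affine: "sgFw q w z = sgFw q w 0 + z / 2 ^ length w"
  using sgFw_diff[of q w z 0] by (simp add: algebra_simps)

lemma continuous_on_sgFw: "continuous_on S (sgFw q w)"
  by (subst sgFw_affine[abs_def]) (intro continuous_intros, simp)

lemma Cons_in_words: "a # w \<in> words (Suc n) \<longleftrightarrow> a \<in> {0,1,2} \<and> w \<in> words n"
  unfolding words_def by auto

lemma words_0: "words 0 = {[]}"
  unfolding words_def by auto

lemma append_in_words: "t \<in> words n \<Longrightarrow> v \<in> words m \<Longrightarrow> t @ v \<in> words (n + m)"
  unfolding words_def by auto

lemma replicate_in_words: "a \<in> {0,1,2} \<Longrightarrow> replicate r a \<in> words r"
  unfolding words_def by auto

lemma words_Suc_image: "words (Suc k) = (\<lambda>(v, a). v @ [a]) ` (words k \<times> {0,1,2})"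
proof
  show "words (Suc k) \<subseteq> (\<lambda>(v, a). v @ [a]) ` (words k \<times> {0,1,2})"
  proof
    fix w assume w: "w \<in> words (Suc k)"
    then obtain t a where "w = t @ [a]" by (cases w rule: rev_cases) (auto simp: words_def)
    with w show "w \<in> (\<lambda>(v, a). v @ [a]) ` (words k \<times> {0,1,2})"
      unfolding words_def by force
  qed
qed (auto simp: words_def)

lemma inj_on_snoc: "inj_on (\<lambda>(v, a). v @ [a]) A"
  by (auto simp: inj_on_def)

lemma card_words: "card (words k) = 3 ^ k"
proof (induction k)
  case (Suc k)
  have "card (words (Suc k)) = card (words k \<times> {0::nat,1,2})"
    unfolding words_Suc_image by (rule card_image[OF inj_on_snoc])
  then show ?case using Suc by (simp add: card_cartesian_product)
qed (simp add: words_0)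

lemma sum_words_Suc:
  fixes f :: "nat list \<Rightarrow> real"
  shows "(\<Sum>v\<in>words (Suc k). f v) = (\<Sum>v\<in>words k. f (v @ [0]) + f (v @ [1]) + f (v @ [2]))"
proof -
  have "(\<Sum>v\<in>words (Suc k). f v) = (\<Sum>x\<in>words k \<times> {0,1,2}. f ((\<lambda>(v, a). v @ [a]) x))"
    unfolding words_Suc_image by (rule sum.reindex[OF inj_on_snoc, unfolded comp_def])
  also have "\<dots> = (\<Sum>v\<in>words k. \<Sum>a\<in>{0::nat,1,2}. f (v @ [a]))"
    by (rule sym, subst sum.cartesian_product) (simp add: case_prod_unfold)
  also have "\<dots> = (\<Sum>v\<in>words k. f (v @ [0]) + f (v @ [1]) + f (v @ [2]))"
    by (simp add: add.assoc)
  finally show ?thesis .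
qed

section \<open>The gasket and its cells\<close>

lemma sgFw_convex_hull_V0:
  "set w \<subseteq> {0,1,2} \<Longrightarrow> z \<in> convex hull (V0 q) \<Longrightarrow> sgFw q w z \<in> convex hull (V0 q)"
proof (induction w)
  case (Cons i w)
  then have "sgFw q w z \<in> convex hull (V0 q)" "q i \<in> convex hull (V0 q)"
    by (auto simp: V0_def intro: hull_inc)
  then have "(1/2::real) *\<^sub>R sgFw q w z + (1/2::real) *\<^sub>R q i \<in> convex hull (V0 q)"
    by (intro convexD[OF convex_convex_hull]) auto
  then show ?case by (simp add: sgF_def scaleR_conv_of_real field_simps)
qed simp

lemma compact_convex_hull_V0: "compact (convex hull (V0 q))"
  by (rule compact_convex_hull) (simp add: V0_def finite_imp_compact)

lemma Vm_subset_convex_hull_V0: "Vm q m \<subseteq> convex hull (V0 q)"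
proof
  fix x assume "x \<in> Vm q m"
  then obtain w y where "w \<in> words m" "y \<in> V0 q" "x = sgFw q w y" unfolding Vm_def by auto
  then show "x \<in> convex hull (V0 q)"
    using sgFw_convex_hull_V0[of w y] hull_inc[of y "V0 q"] by (auto simp: words_def)
qed

lemma Vm_0: "Vm q 0 = V0 q"
  by (simp add: Vm_def words_0)

lemma V0_subset_Vm: "V0 q \<subseteq> Vm q m"
proof
  fix x assume "x \<in> V0 q"
  then obtain k where k: "k \<in> {0,1,2}" "x = q k" unfolding V0_def by auto
  then have "x = sgFw q (replicate m k) (q k)" by (simp add: sgFw_replicate_vertex)
  moreover have "q k \<in> V0 q" using k by (auto simp: V0_def)
  ultimately show "x \<in> Vm q m" unfolding Vm_def using replicate_in_words[OF k(1)] by blast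
qed

lemma Union_sgF_Vm: "(\<Union>i\<in>{0,1,2}. sgF q i ` Vm q m) = Vm q (Suc m)"
proof
  show "(\<Union>i\<in>{0,1,2}. sgF q i ` Vm q m) \<subseteq> Vm q (Suc m)"
  proof (clarify)
    fix i x assume i: "i \<in> {0::nat,1,2}" and "x \<in> Vm q m"
    then obtain w y where "w \<in> words m" "y \<in> V0 q" "x = sgFw q w y" unfolding Vm_def by auto
    with i show "sgF q i x \<in> Vm q (Suc m)"
      unfolding Vm_def by (intro UN_I[of "i # w"]) (auto simp: Cons_in_words)
  qed
  show "Vm q (Suc m) \<subseteq> (\<Union>i\<in>{0,1,2}. sgF q i ` Vm q m)"
  proof
    fix x assume "x \<in> Vm q (Suc m)"
    then obtain w y where w: "w \<in> words (Suc m)" "y \<in> V0 q" "x = sgFw q w y" unfolding Vm_def by auto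
    then obtain a t where at: "w = a # t" by (cases w) (auto simp: words_def)
    then have "a \<in> {0,1,2}" "t \<in> words m" using w(1) by (auto simp: Cons_in_words)
    moreover have "x = sgF q a (sgFw q t y)" using w(3) at by simp
    ultimately show "x \<in> (\<Union>i\<in>{0,1,2}. sgF q i ` Vm q m)" unfolding Vm_def using w(2) by blast
  qed
qed

definition Vstar :: "(nat \<Rightarrow> complex) \<Rightarrow> complex set" where
  "Vstar q = (\<Union>m. Vm q m)"

lemma bounded_Vstar: "bounded (Vstar q)"
proof (rule bounded_subset)
  show "Vstar q \<subseteq> convex hull (V0 q)" unfolding Vstar_def using Vm_subset_convex_hull_V0 by blast
qed (rule compact_imp_bounded[OF compact_convex_hull_V0])

lemma Union_sgF_Vstar: "(\<Union>i\<in>{0,1,2}. sgF q i ` Vstar q) = Vstar q"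
proof -
  have "(\<Union>i\<in>{0,1,2}. sgF q i ` Vstar q) = (\<Union>m. Vm q (Suc m))"
    unfolding Vstar_def Union_sgF_Vm[symmetric] by blast
  also have "\<dots> = Vstar q"
  proof
    show "Vstar q \<subseteq> (\<Union>m. Vm q (Suc m))"
    proof
      fix x assume "x \<in> Vstar q"
      then obtain m where x: "x \<in> Vm q m" unfolding Vstar_def by auto
      show "x \<in> (\<Union>m. Vm q (Suc m))"
      proof (cases m)
        case 0 then show ?thesis using x V0_subset_Vm[of q 1] by (auto simp: Vm_0)
      qed (use x in auto)
    qed
  qed (auto simp: Vstar_def)
  finally show ?thesis .
qed

lemma sgF_closure:
  assumes "bounded X"
  shows "sgF q i ` closure X = closure (sgF q i ` X)"
proof
  show "sgF q i ` closure X \<subseteq> closure (sgF q i ` X)"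
    by (rule image_closure_subset) (auto simp: continuous_on_sgF closure_subset)
  have "compact (sgF q i ` closure X)"
    using assms by (intro compact_continuous_image continuous_on_sgF) (simp add: compact_closure)
  then show "closure (sgF q i ` X) \<subseteq> sgF q i ` closure X"
    by (intro closure_minimal compact_imp_closed) (auto intro: closure_subset[THEN subsetD])
qed

lemma closure_Vstar_self_similar: "closure (Vstar q) = (\<Union>i\<in>{0,1,2}. sgF q i ` closure (Vstar q))"
proof -
  have "(\<Union>i\<in>{0,1,2}. sgF q i ` closure (Vstar q)) = (\<Union>i\<in>{0,1,2}. closure (sgF q i ` Vstar q))"
    using sgF_closure[OF bounded_Vstar] by simp
  also have "\<dots> = closure (\<Union>i\<in>{0,1,2}. sgF q i ` Vstar q)" by simp
  also have "\<dots> = closure (Vstar q)" by (simp only: Union_sgF_Vstar)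
  finally show ?thesis by simp
qed

text \<open>Iterating the self-similarity, every point of \<open>K\<close> lies in some \<open>F\<^sub>w K\<close> with \<open>|w| = n\<close>,
  which is within \<open>2\<^sup>-\<^sup>n diam (K \<union> L)\<close> of \<open>F\<^sub>w L \<subseteq> L\<close>.\<close>
lemma self_similar_subset:
  assumes K: "compact K" "K = (\<Union>i\<in>{0,1,2}. sgF q i ` K)"
    and L: "L \<noteq> {}" "compact L" "L = (\<Union>i\<in>{0,1,2}. sgF q i ` L)"
  shows "K \<subseteq> L"
proof -
  have iterK: "\<forall>x\<in>K. \<exists>w\<in>words n. \<exists>y\<in>K. x = sgFw q w y" for n
  proof (induction n)
    case 0 then show ?case by (auto simp: words_0)
  next
    case (Suc n)
    show ?case
    proof
      fix x assume "x \<in> K"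
      then obtain i y where i: "i \<in> {0,1,2}" "y \<in> K" "x = sgF q i y" using K(2) by blast
      then obtain w z where "w \<in> words n" "z \<in> K" "y = sgFw q w z" using Suc by blast
      with i show "\<exists>w\<in>words (Suc n). \<exists>y\<in>K. x = sgFw q w y"
        by (intro bexI[of _ "i # w"]) (auto simp: Cons_in_words)
    qed
  qed
  have invL: "set w \<subseteq> {0,1,2} \<Longrightarrow> sgFw q w ` L \<subseteq> L" for w
  proof (induction w)
    case (Cons a w)
    then have "sgF q a ` L \<subseteq> L" using L(3) by auto
    then show ?case using Cons by auto
  qed simp
  obtain R where R: "\<forall>x\<in>K \<union> L. \<forall>y\<in>K \<union> L. dist x y \<le> R"
    using bounded_two_points[of "K \<union> L"] K(1) L(2) by (auto dest!: compact_imp_bounded)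
  obtain z where z: "z \<in> L" using L(1) by auto
  show ?thesis
  proof
    fix x assume x: "x \<in> K"
    have "x \<in> closure L" unfolding closure_approachable
    proof (intro allI impI)
      fix e :: real assume e: "e > 0"
      have R0: "0 \<le> R" using R x by (metis UnCI dist_self)
      obtain n where n: "(1/2::real) ^ n < e / (R + 1)"
        using real_arch_pow_inv[of "e / (R + 1)" "1/2"] e R0 by auto
      obtain w y where w: "w \<in> words n" "y \<in> K" "x = sgFw q w y" using iterK x by blast
      have "sgFw q w z \<in> L" using invL[of w] w(1) z unfolding words_def by auto
      moreover have "dist (sgFw q w z) x < e"
      proof -
        have "dist (sgFw q w z) x = dist z y / 2 ^ n"
          using w by (simp add: dist_sgFw words_def)
        also have "\<dots> \<le> R * (1/2)^n" using R z w(2) by (simp add: power_one_over divide_right_mono)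
        also have "\<dots> \<le> (R + 1) * (1/2)^n" by simp
        also have "\<dots> < (R + 1) * (e / (R + 1))" using n R0 by (intro mult_strict_left_mono) auto
        also have "\<dots> = e" using R0 by simp
        finally show ?thesis .
      qed
      ultimately show "\<exists>y\<in>L. dist y x < e" by blast
    qed
    then show "x \<in> L" using L(2) by (simp add: compact_imp_closed closure_closed)
  qed
qed

lemma SG_eq_closure_Vstar: "SG q = closure (Vstar q)"
proof -
  let ?C = "closure (Vstar q)"
  have "?C \<noteq> {}"
    using V0_subset_Vm[of q 0] closure_subset[of "Vstar q"] by (auto simp: Vstar_def V0_def)
  moreover have "compact ?C" using bounded_Vstar by (simp add: compact_closure)
  ultimately have C: "?C \<noteq> {}" "compact ?C" "?C = (\<Union>i\<in>{0,1,2}. sgF q i ` ?C)"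
    using closure_Vstar_self_similar by blast+
  show ?thesis
    unfolding SG_def
  proof (rule the_equality)
    fix K assume K: "K \<noteq> {} \<and> compact K \<and> K = (\<Union>i\<in>{0,1,2}. sgF q i ` K)"
    show "K = ?C"
    proof
      show "K \<subseteq> ?C" using K C by (intro self_similar_subset) blast+
      show "?C \<subseteq> K" using K C by (intro self_similar_subset) blast+
    qed
  qed (use C in blast)
qed

lemma SG_self_similar: "SG q = (\<Union>i\<in>{0,1,2}. sgF q i ` SG q)"
  unfolding SG_eq_closure_Vstar by (rule closure_Vstar_self_similar)

lemma compact_SG: "compact (SG q)"
  using bounded_Vstar SG_eq_closure_Vstar by (simp add: compact_closure)

lemma V0_subset_SG: "V0 q \<subseteq> SG q"
  using V0_subset_Vm[of q 0] closure_subset[of "Vstar q"] unfolding SG_eq_closure_Vstar Vstar_def by auto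

lemma vertex_in_SG: "k \<in> {0,1,2} \<Longrightarrow> q k \<in> SG q"
  using V0_subset_SG unfolding V0_def by auto

lemma SG_subset_convex_hull_V0: "SG q \<subseteq> convex hull (V0 q)"
  unfolding SG_eq_closure_Vstar
  by (intro closure_minimal compact_imp_closed compact_convex_hull_V0)
    (use Vm_subset_convex_hull_V0 in \<open>auto simp: Vstar_def\<close>)

lemma sgF_image_SG: "i \<in> {0,1,2} \<Longrightarrow> sgF q i ` SG q \<subseteq> SG q"
  by (subst (2) SG_self_similar) blast

lemma sgFw_image_SG: "set w \<subseteq> {0,1,2} \<Longrightarrow> sgFw q w ` SG q \<subseteq> SG q"
proof (induction w)
  case (Cons a w)
  then show ?case using sgF_image_SG[of a q] by (auto simp: image_comp[symmetric])
qed simp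

lemma cell_subset_SG: "set w \<subseteq> {0,1,2} \<Longrightarrow> cell q w \<subseteq> SG q"
  unfolding cell_def by (rule sgFw_image_SG)

lemma cell_Nil: "cell q [] = SG q"
  unfolding cell_def by simp

lemma cell_Cons: "cell q (a # w) = sgF q a ` cell q w"
  unfolding cell_def by (simp add: image_comp)

lemma cell_eq_Union_children: "cell q w = (\<Union>a\<in>{0,1,2}. cell q (w @ [a]))"
proof -
  have "cell q w = sgFw q w ` (\<Union>i\<in>{0,1,2}. sgF q i ` SG q)"
    unfolding cell_def by (subst SG_self_similar) (rule refl)
  also have "\<dots> = (\<Union>a\<in>{0,1,2}. cell q (w @ [a]))"
    unfolding cell_def sgFw_append by (auto simp: image_comp)
  finally show ?thesis .
qed

lemma SG_covered_by_cells: "x \<in> SG q \<Longrightarrow> \<exists>w\<in>words n. x \<in> cell q w"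
proof (induction n arbitrary: x)
  case 0 then show ?case by (auto simp: words_0 cell_Nil)
next
  case (Suc n)
  then have "x \<in> (\<Union>i\<in>{0,1,2}. sgF q i ` SG q)" by (simp only: SG_self_similar[symmetric])
  then obtain i y where i: "i \<in> {0,1,2}" "y \<in> SG q" "x = sgF q i y" by blast
  then obtain w where "w \<in> words n" "y \<in> cell q w" using Suc by blast
  with i show ?case by (intro bexI[of _ "i # w"]) (auto simp: Cons_in_words cell_Cons)
qed

lemma vertex_in_cell: "k \<in> {0,1,2} \<Longrightarrow> sgFw q w (q k) \<in> cell q w"
  unfolding cell_def using vertex_in_SG by auto

lemma compact_cell: "compact (cell q w)"
  unfolding cell_def by (intro compact_continuous_image continuous_on_sgFw compact_SG)

section \<open>Intersections of cells\<close>

lemma split_trailing_replicate: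
  "set w \<subseteq> {0,1,2} \<Longrightarrow> w \<noteq> replicate (length w) i \<Longrightarrow>
    \<exists>u j r. j \<in> {0,1,2} \<and> j \<noteq> i \<and> w = u @ j # replicate r i"
proof (induction w rule: rev_induct)
  case (snoc a w)
  show ?case
  proof (cases "a = i")
    case True
    then have "w \<noteq> replicate (length w) i"
      using snoc.prems(2) by (auto simp: replicate_append_same[symmetric])
    then obtain u j r where "j \<in> {0,1,2}" "j \<noteq> i" "w = u @ j # replicate r i"
      using snoc by auto
    with True show ?thesis by (intro exI[of _ u] exI[of _ j] exI[of _ "Suc r"]) (simp add: replicate_append_same)
  qed (use snoc.prems in \<open>intro exI[of _ w] exI[of _ a] exI[of _ 0], auto\<close>)
qed simp

lemma replicate_Cons_prefix_unique:
  "j \<noteq> i \<Longrightarrow> j' \<noteq> i \<Longrightarrow> replicate r i @ j # x = replicate r' i @ j' # x' \<Longrightarrow>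
    r = r' \<and> j = j' \<and> x = x'"
proof (induction r arbitrary: r')
  case 0 then show ?case by (cases r') auto
next
  case (Suc r) then show ?case by (cases r') auto
qed

lemma split_trailing_replicate_unique:
  assumes "j \<noteq> i" "j' \<noteq> i" "u @ j # replicate r i = u' @ j' # replicate r' i"
  shows "u = u' \<and> j = j' \<and> r = r'"
proof -
  have "replicate r i @ j # rev u = replicate r' i @ j' # rev u'"
    using arg_cong[OF assms(3), of rev] by simp
  then show ?thesis using replicate_Cons_prefix_unique[OF assms(1,2)] by blast
qed

context sg_triangle
begin

lemma SG_subset_triangle: "SG q \<subseteq> triangle"
  using SG_subset_convex_hull_V0 convex_hull_V0_subset_triangle by blast

lemma sgF_images_meet_at_junction:
  assumes a: "a \<in> {0,1,2}" and b: "b \<in> {0,1,2}" and ab: "a \<noteq> b"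
    and x: "x \<in> sgF q a ` SG q" "x \<in> sgF q b ` SG q"
  shows "x = sgF q a (q b)"
proof -
  obtain y y' where y: "y \<in> triangle" "x = sgF q a y" and y': "y' \<in> triangle" "x = sgF q b y'"
    using x SG_subset_triangle by blast
  obtain c where c: "c \<in> {0,1,2}" "c \<noteq> a" "c \<noteq> b"
    using third_index[OF a b ab] by metis
  note abc = three_indices_eq[OF a b c(1) ab c(2)[symmetric] c(3)[symmetric]]
  have "2 * bary a x = bary a y + 1" using y a by (simp add: bary_sgF)
  moreover have "2 * bary b x = bary b y' + 1" using y' b by (simp add: bary_sgF)
  moreover have "2 * bary c x = bary c y" using y a c by (simp add: bary_sgF)
  moreover have "0 \<le> bary a y" "0 \<le> bary b y'" "0 \<le> bary c y"
    using y y' a b c unfolding triangle_def by auto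
  moreover have "bary a x + bary b x + bary c x = 1"
    using sum_three_distinct[OF a b c(1) ab, of "\<lambda>k. bary k x"] c bary_sum[of x] by auto
  ultimately have "bary a x = 1/2" "bary b x = 1/2" "bary c x = 0" by linarith+
  moreover have "bary a (sgF q a (q b)) = 1/2" "bary b (sgF q a (q b)) = 1/2" "bary c (sgF q a (q b)) = 0"
    using a b c ab by (auto simp: bary_sgF bary_vertex)
  ultimately show ?thesis
    using abc by (intro bary_inject) (metis insert_iff singletonD)
qed

lemma sgF_eq_vertex:
  assumes a: "a \<in> {0,1,2}" and b: "b \<in> {0,1,2}" and z: "z \<in> SG q" and e: "sgF q a z = q b"
  shows "a = b \<and> z = q b"
proof -
  have zT: "z \<in> triangle" using z SG_subset_triangle by auto
  have "bary b (sgF q a z) = 1" using e b by (simp add: bary_vertex)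
  then have h: "bary b z + (if b = a then 1 else 0) = 2" using a b by (simp add: bary_sgF)
  moreover have "bary b z \<le> 1" using bary_le_1[OF zT b] .
  ultimately have ab: "a = b" by (auto split: if_splits)
  with h have "bary b z = 1" by simp
  with ab show ?thesis using bary_eq_1_imp_vertex zT b by auto
qed

lemma sgFw_eq_vertex:
  "set w \<subseteq> {0,1,2} \<Longrightarrow> z \<in> SG q \<Longrightarrow> b \<in> {0,1,2} \<Longrightarrow> sgFw q w z = q b
    \<Longrightarrow> w = replicate (length w) b \<and> z = q b"
proof (induction w)
  case (Cons a w)
  have "sgFw q w z \<in> SG q" using Cons.prems sgFw_image_SG[of w] by auto
  then have "a = b \<and> sgFw q w z = q b" using sgF_eq_vertex[of a b "sgFw q w z"] Cons.prems by auto
  then show ?case using Cons by auto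
qed simp

lemma vertex_in_other_cell:
  "w \<in> words n \<Longrightarrow> v \<in> words n \<Longrightarrow> i \<in> {0,1,2} \<Longrightarrow> sgFw q w (q i) \<in> cell q v \<Longrightarrow>
    v = w \<or> (\<exists>u j r. j \<in> {0,1,2} \<and> j \<noteq> i \<and> w = u @ j # replicate r i \<and> v = u @ i # replicate r j)"
proof (induction w arbitrary: n v)
  case Nil then show ?case by (simp add: words_def)
next
  case (Cons a w)
  obtain n' where n: "n = Suc n'" using Cons.prems(1) by (cases n) (auto simp: words_def)
  obtain b v' where v: "v = b # v'" using Cons.prems(2) n by (cases v) (auto simp: words_def)
  have a: "a \<in> {0,1,2}" and w: "w \<in> words n'" using Cons.prems(1) n by (auto simp: Cons_in_words)
  have b: "b \<in> {0,1,2}" and v': "v' \<in> words n'" using Cons.prems(2) n v by (auto simp: Cons_in_words)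
  have x: "sgF q a (sgFw q w (q i)) \<in> sgF q b ` cell q v'" using Cons.prems(4) v by (simp add: cell_Cons)
  show ?case
  proof (cases "a = b")
    case True
    then have "sgFw q w (q i) \<in> cell q v'" using x by (auto dest: sgF_inj)
    then have "v' = w \<or> (\<exists>u j r. j \<in> {0,1,2} \<and> j \<noteq> i \<and> w = u @ j # replicate r i \<and> v' = u @ i # replicate r j)"
      using Cons.IH[OF w v' Cons.prems(3)] by blast
    then show ?thesis
    proof
      assume "\<exists>u j r. j \<in> {0,1,2} \<and> j \<noteq> i \<and> w = u @ j # replicate r i \<and> v' = u @ i # replicate r j"
      then obtain u j r where "j \<in> {0,1,2}" "j \<noteq> i" "w = u @ j # replicate r i" "v' = u @ i # replicate r j"
        by blast
      then show ?thesis using True v by (intro disjI2 exI[of _ "a # u"] exI[of _ j] exI[of _ r]) auto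
    qed (use True v in simp)
  next
    case False
    have wS: "set w \<subseteq> {0,1,2}" and vS: "set v' \<subseteq> {0,1,2}" using w v' by (auto simp: words_def)
    have i: "q i \<in> SG q" using Cons.prems(3) vertex_in_SG by auto
    have "sgF q a (sgFw q w (q i)) \<in> sgF q a ` SG q" using sgFw_image_SG[OF wS] i by auto
    moreover have "sgF q a (sgFw q w (q i)) \<in> sgF q b ` SG q" using x cell_subset_SG[OF vS] by auto
    ultimately have xe: "sgF q a (sgFw q w (q i)) = sgF q a (q b)"
      using sgF_images_meet_at_junction[OF a b False] by blast
    then have "sgFw q w (q i) = q b" by (rule sgF_inj)
    then have wr: "w = replicate (length w) b" and "q i = q b"
      using sgFw_eq_vertex[OF wS i b] by auto
    then have ib: "i = b" using Cons.prems(3) b vertex_inj[of i b] by auto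
    obtain y where y: "y \<in> cell q v'" "sgF q b y = sgF q b (q a)"
      using x xe sgF_vertex_comm[of q a b] by auto
    then obtain z where z: "z \<in> SG q" "sgFw q v' z = q a" unfolding cell_def by (auto dest: sgF_inj)
    then have vr: "v' = replicate (length v') a" using sgFw_eq_vertex[OF vS z(1) a] by auto
    have "length v' = length w" using v' w by (simp add: words_def)
    then show ?thesis using wr vr ib False v a
      by (intro disjI2 exI[of _ "[]"] exI[of _ a] exI[of _ "length w"]) auto
  qed
qed

lemma nbr_word_eq:
  assumes w: "w \<in> words (length w)" and i: "i \<in> {0,1,2}" and j: "j \<in> {0,1,2}" and ji: "j \<noteq> i"
    and wd: "w = u @ j # replicate r i"
  shows "nbr_word q w i = u @ i # replicate r j"
  unfolding nbr_word_def
proof (rule the_equality)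
  have "u @ i # replicate r j \<in> words (length w)" using w wd i j by (auto simp: words_def)
  moreover have "sgFw q w (q i) = sgFw q (u @ i # replicate r j) (q j)"
    using wd by (simp add: sgFw_append sgFw_replicate_vertex sgF_vertex_comm)
  ultimately show "u @ i # replicate r j \<in> words (length w) \<and> u @ i # replicate r j \<noteq> w \<and>
      sgFw q w (q i) \<in> cell q (u @ i # replicate r j)"
    using ji wd vertex_in_cell[OF j] by simp
  fix v assume "v \<in> words (length w) \<and> v \<noteq> w \<and> sgFw q w (q i) \<in> cell q v"
  then obtain u' j' r' where o: "j' \<noteq> i" "w = u' @ j' # replicate r' i" "v = u' @ i # replicate r' j'"
    using vertex_in_other_cell[OF w _ i] by blast
  then have "u = u' \<and> j = j' \<and> r = r'" using split_trailing_replicate_unique[of j i j'] ji wd by metis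
  then show "v = u @ i # replicate r j" using o(3) by simp
qed

lemma cells_inter_subset_singleton:
  "v \<in> words n \<Longrightarrow> v' \<in> words n \<Longrightarrow> v \<noteq> v' \<Longrightarrow> \<exists>p. cell q v \<inter> cell q v' \<subseteq> {p}"
proof (induction v arbitrary: n v')
  case Nil then show ?case by (simp add: words_def)
next
  case (Cons a v)
  obtain n' where n: "n = Suc n'" using Cons.prems(1) by (cases n) (auto simp: words_def)
  obtain b w where v': "v' = b # w" using Cons.prems(2) n by (cases v') (auto simp: words_def)
  have a: "a \<in> {0,1,2}" and v: "v \<in> words n'" using Cons.prems(1) n by (auto simp: Cons_in_words)
  have b: "b \<in> {0,1,2}" and w: "w \<in> words n'" using Cons.prems(2) n v' by (auto simp: Cons_in_words)
  show ?case
  proof (cases "a = b")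
    case True
    then have "v \<noteq> w" using Cons.prems(3) v' by simp
    then obtain p where p: "cell q v \<inter> cell q w \<subseteq> {p}" using Cons.IH[OF v w] by blast
    have "cell q (a # v) \<inter> cell q v' \<subseteq> {sgF q a p}"
      using p True v' by (auto simp: cell_Cons dest: sgF_inj)
    then show ?thesis by blast
  next
    case False
    have "cell q (a # v) \<inter> cell q v' \<subseteq> {sgF q a (q b)}"
    proof
      fix x assume x: "x \<in> cell q (a # v) \<inter> cell q v'"
      have "x \<in> sgF q a ` SG q" using x cell_subset_SG[of v] v by (auto simp: cell_Cons words_def)
      moreover have "x \<in> sgF q b ` SG q" using x cell_subset_SG[of w] w v' by (auto simp: cell_Cons words_def)
      ultimately show "x \<in> {sgF q a (q b)}" using sgF_images_meet_at_junction[OF a b False] by auto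
    qed
    then show ?thesis by blast
  qed
qed

lemma interior_cell_decomposition:
  assumes w: "w \<in> words (length w)" and interior: "cell q w \<inter> V0 q = {}" and i: "i \<in> {0,1,2}"
  obtains u j r where "j \<in> {0,1,2}" "j \<noteq> i" "w = u @ j # replicate r i"
proof -
  have "w \<noteq> replicate (length w) i"
  proof
    assume "w = replicate (length w) i"
    then have "q i \<in> cell q w" using vertex_in_cell[OF i, of q w] by (metis sgFw_replicate_vertex)
    with interior i show False by (auto simp: V0_def)
  qed
  then show thesis using split_trailing_replicate[of w i] w that by (auto simp: words_def)
qed

lemma nbr_word_in_words:
  assumes "w \<in> words (length w)" "cell q w \<inter> V0 q = {}" "i \<in> {0,1,2}"
  shows "nbr_word q w i \<in> words (length w)" "nbr_word q w i \<noteq> w"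
proof -
  obtain u j r where d: "j \<in> {0,1,2}" "j \<noteq> i" "w = u @ j # replicate r i"
    using interior_cell_decomposition[OF assms] .
  show "nbr_word q w i \<in> words (length w)" "nbr_word q w i \<noteq> w"
    using nbr_word_eq[OF assms(1,3) d] assms(1,3) d by (auto simp: words_def)
qed

lemma vertex_in_nbr_cell:
  assumes "w \<in> words (length w)" "cell q w \<inter> V0 q = {}" "i \<in> {0,1,2}"
  shows "sgFw q w (q i) \<in> cell q (nbr_word q w i)"
proof -
  obtain u j r where d: "j \<in> {0,1,2}" "j \<noteq> i" "w = u @ j # replicate r i"
    using interior_cell_decomposition[OF assms] .
  have "sgFw q w (q i) = sgFw q (u @ i # replicate r j) (q j)"
    using d(3) by (simp add: sgFw_append sgFw_replicate_vertex sgF_vertex_comm)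
  then show ?thesis using nbr_word_eq[OF assms(1,3) d] vertex_in_cell[OF d(1)] by simp
qed

lemma nbr_word_inj:
  assumes w: "w \<in> words (length w)" and interior: "cell q w \<inter> V0 q = {}"
    and i: "i \<in> {0,1,2}" and k: "k \<in> {0,1,2}" and ik: "i \<noteq> k"
  shows "nbr_word q w i \<noteq> nbr_word q w k"
proof
  assume eq: "nbr_word q w i = nbr_word q w k"
  have "sgFw q w (q i) \<in> cell q w \<inter> cell q (nbr_word q w i)"
    "sgFw q w (q k) \<in> cell q w \<inter> cell q (nbr_word q w i)"
    using vertex_in_nbr_cell[OF w interior i] vertex_in_nbr_cell[OF w interior k] eq
      vertex_in_cell[OF i] vertex_in_cell[OF k] by auto
  moreover obtain p where "cell q w \<inter> cell q (nbr_word q w i) \<subseteq> {p}"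
    using cells_inter_subset_singleton[OF w nbr_word_in_words(1)[OF w interior i]]
      nbr_word_in_words(2)[OF w interior i] by metis
  ultimately have "q i = q k" using sgFw_inj by blast
  with vertex_inj[OF i k] ik show False by blast
qed

lemma junction_cells:
  assumes u: "u \<in> words n" and a: "a \<in> {0,1,2}" and b: "b \<in> {0,1,2}" and ab: "a \<noteq> b"
    and v: "v \<in> words (Suc n)" and x: "sgFw q (u @ [a]) (q b) \<in> cell q v"
  shows "v = u @ [a] \<or> v = u @ [b]"
proof -
  have "u @ [a] \<in> words (Suc n)" using u a by (auto simp: words_def)
  from vertex_in_other_cell[OF this v b x] show ?thesis
  proof
    assume "\<exists>u' j r. j \<in> {0,1,2} \<and> j \<noteq> b \<and> u @ [a] = u' @ j # replicate r b \<and> v = u' @ b # replicate r j"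
    then obtain u' j r where o: "j \<noteq> b" "u @ [a] = u' @ j # replicate r b" "v = u' @ b # replicate r j"
      by blast
    have "r = 0"
    proof (rule ccontr)
      assume "r \<noteq> 0"
      then have "last (u' @ j # replicate r b) = b" by (cases r) auto
      then show False using o(2) ab by (metis last_snoc)
    qed
    with o show ?thesis by simp
  qed simp
qed

lemma junction_points_distinct:
  assumes "a \<in> {0,1,2}" "b \<in> {0,1,2}" "c \<in> {0,1,2}" "a \<noteq> b" "a \<noteq> c" "b \<noteq> c"
  shows "distinct [q a, q b, sgF q a (q c), sgF q b (q c), sgF q a (q b)]"
proof -
  let ?coords = "\<lambda>z. (bary a z, bary b z, bary c z)"
  have "map ?coords [q a, q b, sgF q a (q c), sgF q b (q c), sgF q a (q b)]
      = [(1, 0, 0), (0, 1, 0), (1/2, 0, 1/2), (0, 1/2, 1/2), (1/2, 1/2, 0)]"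
    using assms by (simp add: bary_sgF bary_vertex)
  then have "distinct (map ?coords [q a, q b, sgF q a (q c), sgF q b (q c), sgF q a (q b)])" by simp
  then show ?thesis unfolding distinct_map by (rule conjunct1)
qed

lemma sg_adj_junction:
  assumes u: "u \<in> words n" and a: "a \<in> {0,1,2}" and b: "b \<in> {0,1,2}" and c: "c \<in> {0,1,2}"
    and ab: "a \<noteq> b" "a \<noteq> c" "b \<noteq> c"
  shows "{y. sg_adj q (Suc n) (sgFw q u (sgF q a (q b))) y} =
    sgFw q u ` {q a, q b, sgF q a (q c), sgF q b (q c)}"
    (is "{y. sg_adj q (Suc n) ?x y} = ?R")
proof -
  have V0: "V0 q = {q a, q b, q c}"
    unfolding V0_eq_image three_indices_eq[OF a b c ab, symmetric] by simp
  have ua: "sgFw q (u @ [a]) ` V0 q = {sgFw q u (q a), ?x, sgFw q u (sgF q a (q c))}"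
    unfolding V0 by (simp add: sgFw_snoc sgF_vertex_fixed)
  have ub: "sgFw q (u @ [b]) ` V0 q = {?x, sgFw q u (q b), sgFw q u (sgF q b (q c))}"
    unfolding V0 by (simp add: sgFw_snoc sgF_vertex_fixed sgF_vertex_comm)
  have "?x \<notin> ?R"
  proof
    assume "?x \<in> ?R"
    then obtain y where "y \<in> {q a, q b, sgF q a (q c), sgF q b (q c)}" "sgF q a (q b) = y"
      by (auto dest: sgFw_inj)
    with junction_points_distinct[OF a b c ab] show False by auto
  qed
  then have R: "?R = (sgFw q (u @ [a]) ` V0 q \<union> sgFw q (u @ [b]) ` V0 q) - {?x}"
    unfolding ua ub by auto
  have "sg_adj q (Suc n) ?x y \<longleftrightarrow> y \<in> (sgFw q (u @ [a]) ` V0 q \<union> sgFw q (u @ [b]) ` V0 q) - {?x}" for y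
  proof
    assume "sg_adj q (Suc n) ?x y"
    then obtain v where y: "y \<noteq> ?x" "v \<in> words (Suc n)" "?x \<in> sgFw q v ` V0 q" "y \<in> sgFw q v ` V0 q"
      unfolding sg_adj_def by auto
    have "?x \<in> cell q v" using y(3) V0_subset_SG unfolding cell_def by auto
    then have "v = u @ [a] \<or> v = u @ [b]" using junction_cells[OF u a b ab(1) y(2)] by (simp add: sgFw_snoc)
    with y show "y \<in> (sgFw q (u @ [a]) ` V0 q \<union> sgFw q (u @ [b]) ` V0 q) - {?x}" by blast
  next
    assume y: "y \<in> (sgFw q (u @ [a]) ` V0 q \<union> sgFw q (u @ [b]) ` V0 q) - {?x}"
    have "u @ [a] \<in> words (Suc n)" "u @ [b] \<in> words (Suc n)" using u a b by (auto simp: words_def)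
    moreover have "?x \<in> sgFw q (u @ [a]) ` V0 q" "?x \<in> sgFw q (u @ [b]) ` V0 q"
      unfolding ua ub by simp_all
    ultimately show "sg_adj q (Suc n) ?x y" using y unfolding sg_adj_def by blast
  qed
  then show ?thesis unfolding R by blast
qed

lemma junction_in_Vm_minus_V0:
  assumes u: "u \<in> words n" and a: "a \<in> {0,1,2}" and b: "b \<in> {0,1,2}" and ab: "a \<noteq> b"
  shows "sgFw q u (sgF q a (q b)) \<in> Vm q (Suc n) - V0 q"
proof
  have "u @ [a] \<in> words (Suc n)" using u a by (auto simp: words_def)
  moreover have "sgFw q u (sgF q a (q b)) \<in> sgFw q (u @ [a]) ` V0 q"
    using b by (auto simp: V0_def sgFw_snoc)
  ultimately show "sgFw q u (sgF q a (q b)) \<in> Vm q (Suc n)" unfolding Vm_def by blast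
  show "sgFw q u (sgF q a (q b)) \<notin> V0 q"
  proof
    assume "sgFw q u (sgF q a (q b)) \<in> V0 q"
    then obtain k where k: "k \<in> {0,1,2}" "sgFw q (u @ [a]) (q b) = q k"
      unfolding V0_def by (auto simp: sgFw_snoc)
    have "set (u @ [a]) \<subseteq> {0,1,2}" using u a by (auto simp: words_def)
    then have r: "u @ [a] = replicate (length (u @ [a])) k" and "q b = q k"
      using sgFw_eq_vertex[OF _ vertex_in_SG[OF b] k] by blast+
    then have "b = k" using vertex_inj[OF b k(1)] by blast
    moreover have "a = k" using arg_cong[OF r, of last] by simp
    ultimately show False using ab by simp
  qed
qed

section \<open>Harmonic functions\<close>

lemma harmonic_junction_rule:
  assumes harm: "harmonic q h"
    and u: "u \<in> words n" and a: "a \<in> {0,1,2}" and b: "b \<in> {0,1,2}" and c: "c \<in> {0,1,2}"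
    and ab: "a \<noteq> b" "a \<noteq> c" "b \<noteq> c"
  shows "4 * h (sgFw q u (sgF q a (q b))) = h (sgFw q u (q a)) + h (sgFw q u (q b))
           + h (sgFw q u (sgF q a (q c))) + h (sgFw q u (sgF q b (q c)))"
proof -
  let ?x = "sgFw q u (sgF q a (q b))"
  have "h ?x = (1/4) * (\<Sum>y\<in>{y. sg_adj q (Suc n) ?x y}. h y)"
    using harm junction_in_Vm_minus_V0[OF u a b ab(1)] unfolding harmonic_def by auto
  also have "(\<Sum>y\<in>{y. sg_adj q (Suc n) ?x y}. h y) = (\<Sum>y\<in>{q a, q b, sgF q a (q c), sgF q b (q c)}. h (sgFw q u y))"
    unfolding sg_adj_junction[OF u a b c ab]
    by (rule sum.reindex[unfolded comp_def]) (auto simp: inj_on_def dest: sgFw_inj)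
  also have "\<dots> = h (sgFw q u (q a)) + h (sgFw q u (q b)) + h (sgFw q u (sgF q a (q c))) + h (sgFw q u (sgF q b (q c)))"
    using junction_points_distinct[OF a b c ab] by (simp add: add.assoc)
  finally show ?thesis by simp
qed

lemma harmonic_junction_value:
  assumes harm: "harmonic q h"
    and u: "u \<in> words n" and a: "a \<in> {0,1,2}" and b: "b \<in> {0,1,2}" and c: "c \<in> {0,1,2}"
    and ab: "a \<noteq> b" "a \<noteq> c" "b \<noteq> c"
  shows "5 * h (sgFw q u (sgF q a (q b))) = 2 * h (sgFw q u (q a)) + 2 * h (sgFw q u (q b)) + h (sgFw q u (q c))"
proof -
  have "4 * h (sgFw q u (sgF q a (q b))) = h (sgFw q u (q a)) + h (sgFw q u (q b))
          + h (sgFw q u (sgF q a (q c))) + h (sgFw q u (sgF q b (q c)))"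
    by (rule harmonic_junction_rule[OF harm u a b c ab])
  moreover have "4 * h (sgFw q u (sgF q a (q c))) = h (sgFw q u (q a)) + h (sgFw q u (q c))
          + h (sgFw q u (sgF q a (q b))) + h (sgFw q u (sgF q b (q c)))"
    using harmonic_junction_rule[OF harm u a c b] ab by (simp add: sgF_vertex_comm[of q c b])
  moreover have "4 * h (sgFw q u (sgF q b (q c))) = h (sgFw q u (q b)) + h (sgFw q u (q c))
          + h (sgFw q u (sgF q a (q b))) + h (sgFw q u (sgF q a (q c)))"
    using harmonic_junction_rule[OF harm u b c a] ab by (simp add: sgF_vertex_comm[of q _ a])
  ultimately show ?thesis by argo
qed

definition vertex_sum :: "(complex \<Rightarrow> real) \<Rightarrow> nat list \<Rightarrow> real" where
  "vertex_sum h t = h (sgFw q t (q 0)) + h (sgFw q t (q 1)) + h (sgFw q t (q 2))"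

lemma vertex_sum_distinct:
  assumes "a \<in> {0,1,2}" "b \<in> {0,1,2}" "c \<in> {0,1,2}" "a \<noteq> b" "a \<noteq> c" "b \<noteq> c"
  shows "vertex_sum h t = h (sgFw q t (q a)) + h (sgFw q t (q b)) + h (sgFw q t (q c))"
  unfolding vertex_sum_def
  using sum_three_distinct[OF assms, of "\<lambda>k. h (sgFw q t (q k))"] by simp

lemma vertex_sum_children:
  assumes harm: "harmonic q h" and t: "t \<in> words n"
  shows "vertex_sum h (t @ [0]) + vertex_sum h (t @ [1]) + vertex_sum h (t @ [2]) = 3 * vertex_sum h t"
proof -
  have m: "5 * h (sgFw q t (sgF q 0 (q 1))) = 2 * h (sgFw q t (q 0)) + 2 * h (sgFw q t (q 1)) + h (sgFw q t (q 2))"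
       "5 * h (sgFw q t (sgF q 0 (q 2))) = 2 * h (sgFw q t (q 0)) + 2 * h (sgFw q t (q 2)) + h (sgFw q t (q 1))"
       "5 * h (sgFw q t (sgF q 1 (q 2))) = 2 * h (sgFw q t (q 1)) + 2 * h (sgFw q t (q 2)) + h (sgFw q t (q 0))"
    by (rule harmonic_junction_value[OF harm t]; simp)+
  have s: "sgF q 1 (q 0) = sgF q 0 (q 1)" "sgF q 2 (q 0) = sgF q 0 (q 2)" "sgF q 2 (q 1) = sgF q 1 (q 2)"
    by (simp_all add: sgF_vertex_comm)
  show ?thesis
    unfolding vertex_sum_def sgFw_snoc sgF_vertex_fixed s using m by argo
qed

lemma sum_vertex_sum_words:
  assumes harm: "harmonic q h" and t: "t \<in> words n"
  shows "(\<Sum>v\<in>words k. vertex_sum h (t @ v)) = 3 ^ k * vertex_sum h t"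
proof (induction k)
  case (Suc k)
  have "(\<Sum>v\<in>words (Suc k). vertex_sum h (t @ v))
      = (\<Sum>v\<in>words k. vertex_sum h ((t @ v) @ [0]) + vertex_sum h ((t @ v) @ [1]) + vertex_sum h ((t @ v) @ [2]))"
    using sum_words_Suc[of "\<lambda>v. vertex_sum h (t @ v)" k] by simp
  also have "\<dots> = (\<Sum>v\<in>words k. 3 * vertex_sum h (t @ v))"
    using vertex_sum_children[OF harm append_in_words[OF t]] by (intro sum.cong) auto
  also have "\<dots> = 3 ^ Suc k * vertex_sum h t" by (simp add: sum_distrib_left[symmetric] Suc)
  finally show ?case .
qed (simp add: words_0)

text \<open>In the step \<open>r \<rightarrow> r + 1\<close> each cell keeps its vertex at the common point and two of its
  other vertices are replaced by junction points, whose values the \<open>2/5\<close>-rule expresses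
  through the old ones.\<close>
lemma vertex_sum_neighbours:
  assumes harm: "harmonic q h" and u: "u \<in> words n" and i: "i \<in> {0,1,2}" and j: "j \<in> {0,1,2}"
    and ij: "i \<noteq> j"
  shows "vertex_sum h (u @ j # replicate r i) + vertex_sum h (u @ i # replicate r j)
    = 6 * h (sgFw q u (sgF q j (q i)))"
proof -
  obtain c where c: "c \<in> {0,1,2}" "c \<noteq> i" "c \<noteq> j" using third_index[OF i j ij] by metis
  note vs = vertex_sum_distinct[OF i j c(1) ij c(2)[symmetric] c(3)[symmetric]]
  define x where "x = h (sgFw q u (sgF q j (q i)))"
  have xs: "h (sgFw q u (sgF q i (q j))) = x" unfolding x_def by (simp add: sgF_vertex_comm)
  show ?thesis unfolding x_def[symmetric]
  proof (induction r)
    case 0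
    have "4 * x = h (sgFw q u (q j)) + h (sgFw q u (q i)) + h (sgFw q u (sgF q j (q c))) + h (sgFw q u (sgF q i (q c)))"
      unfolding x_def using harmonic_junction_rule[OF harm u j i c(1)] ij c by auto
    moreover have "vertex_sum h (u @ [j]) = x + h (sgFw q u (q j)) + h (sgFw q u (sgF q j (q c)))"
      unfolding vs sgFw_snoc sgF_vertex_fixed x_def by simp
    moreover have "vertex_sum h (u @ [i]) = h (sgFw q u (q i)) + x + h (sgFw q u (sgF q i (q c)))"
      unfolding vs sgFw_snoc sgF_vertex_fixed xs by simp
    ultimately show ?case by simp
  next
    case (Suc r)
    define t where "t = u @ j # replicate r i"
    define t' where "t' = u @ i # replicate r j"
    have tw: "t \<in> words (n + Suc r)" and tw': "t' \<in> words (n + Suc r)"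
      unfolding t_def t'_def using u i j by (auto simp: words_def)
    have T: "u @ j # replicate (Suc r) i = t @ [i]" and T': "u @ i # replicate (Suc r) j = t' @ [j]"
      unfolding t_def t'_def by (simp_all add: replicate_append_same)
    have hi: "h (sgFw q t (q i)) = x" unfolding t_def x_def by (simp add: sgFw_append sgFw_replicate_vertex)
    have hj: "h (sgFw q t' (q j)) = x" unfolding t'_def using xs by (simp add: sgFw_append sgFw_replicate_vertex)
    have "5 * h (sgFw q t (sgF q i (q j))) = 2 * h (sgFw q t (q i)) + 2 * h (sgFw q t (q j)) + h (sgFw q t (q c))"
      using harmonic_junction_value[OF harm tw i j c(1)] ij c by auto
    moreover have "5 * h (sgFw q t (sgF q i (q c))) = 2 * h (sgFw q t (q i)) + 2 * h (sgFw q t (q c)) + h (sgFw q t (q j))"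
      using harmonic_junction_value[OF harm tw i c(1) j] ij c by auto
    moreover have "5 * h (sgFw q t' (sgF q j (q i))) = 2 * h (sgFw q t' (q j)) + 2 * h (sgFw q t' (q i)) + h (sgFw q t' (q c))"
      using harmonic_junction_value[OF harm tw' j i c(1)] ij c by auto
    moreover have "5 * h (sgFw q t' (sgF q j (q c))) = 2 * h (sgFw q t' (q j)) + 2 * h (sgFw q t' (q c)) + h (sgFw q t' (q i))"
      using harmonic_junction_value[OF harm tw' j c(1) i] ij c by auto
    moreover have "vertex_sum h t + vertex_sum h t' = 6 * x" using Suc unfolding t_def t'_def .
    ultimately show ?case
      unfolding T T' vs sgFw_snoc sgF_vertex_fixed using hi hj by argo
  qed
qed

lemma small_cells_near_vertex_mean:
  fixes h :: "complex \<Rightarrow> real"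
  assumes hc: "continuous_on (SG q) h" and e: "e > 0"
  obtains k where "\<And>n w z. n \<ge> k \<Longrightarrow> w \<in> words n \<Longrightarrow> z \<in> cell q w \<Longrightarrow>
    \<bar>h z - vertex_sum h w / 3\<bar> \<le> e"
proof -
  obtain d where d: "d > 0"
    "\<And>x x'. x \<in> SG q \<Longrightarrow> x' \<in> SG q \<Longrightarrow> dist x' x < d \<Longrightarrow> dist (h x') (h x) < e"
    using compact_uniformly_continuous[OF hc compact_SG] e unfolding uniformly_continuous_on_def by metis
  obtain R where R: "\<And>x y. x \<in> SG q \<Longrightarrow> y \<in> SG q \<Longrightarrow> dist x y \<le> R"
    using bounded_two_points[of "SG q"] compact_imp_bounded[OF compact_SG] by auto
  have R0: "0 \<le> R" using R[of "q 0" "q 0"] vertex_in_SG[of 0] by simp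
  obtain k where k: "(1/2::real)^k < d / (R + 1)"
    using real_arch_pow_inv[of "d / (R + 1)" "1/2"] d(1) R0 by auto
  show thesis
  proof (rule that)
    fix n w z assume n: "n \<ge> k" and w: "w \<in> words n" and z: "z \<in> cell q w"
    obtain y where y: "y \<in> SG q" "z = sgFw q w y" using z unfolding cell_def by auto
    have wS: "set w \<subseteq> {0,1,2}" and len: "length w = n" using w by (auto simp: words_def)
    have zS: "z \<in> SG q" using cell_subset_SG[OF wS] z by auto
    have near: "\<bar>h z - h (sgFw q w (q j))\<bar> < e" if j: "j \<in> {0,1,2}" for j
    proof -
      have "dist z (sgFw q w (q j)) = dist y (q j) / 2 ^ n"
        using y(2) dist_sgFw len by simp
      also have "\<dots> \<le> R / 2 ^ n" using R[OF y(1) vertex_in_SG[OF j]] by (simp add: divide_right_mono)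
      also have "\<dots> \<le> R / 2 ^ k" using R0 n by (intro divide_left_mono) (auto simp: power_increasing)
      also have "\<dots> \<le> (R + 1) * (1/2)^k" by (simp add: power_one_over divide_right_mono)
      also have "\<dots> < (R + 1) * (d / (R + 1))" using k R0 by (intro mult_strict_left_mono) auto
      also have "\<dots> = d" using R0 by simp
      finally have "dist (h z) (h (sgFw q w (q j))) < e"
        using d(2)[OF cell_subset_SG[OF wS, THEN subsetD, OF vertex_in_cell[OF j]] zS]
        by (simp add: dist_commute)
      then show ?thesis by (simp add: dist_real_def)
    qed
    from near[of 0] near[of 1] near[of 2]
    have "h z * 3 - vertex_sum h w \<le> e * 3" "vertex_sum h w - h z * 3 \<le> e * 3"
      unfolding vertex_sum_def by (simp_all add: abs_less_iff)
    then show "\<bar>h z - vertex_sum h w / 3\<bar> \<le> e" by (simp add: abs_le_iff field_simps)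
  qed
qed

end

section \<open>The truncated neighbours \<open>E\<^sub>i\<close>\<close>

locale sg_equilateral =
  fixes q :: "nat \<Rightarrow> complex"
  assumes equilateral: "equilateral q"

sublocale sg_equilateral \<subseteq> sg_triangle
  using equilateral_nondegenerate[OF equilateral] by unfold_locales

context sg_equilateral
begin

definition side :: real where
  "side = dist (q 0) (q 1)"

lemma side_pos: "side > 0"
  using equilateral unfolding side_def equilateral_def by auto

lemma norm_vertex_diff: "a \<in> {0,1,2} \<Longrightarrow> b \<in> {0,1,2} \<Longrightarrow> a \<noteq> b \<Longrightarrow> norm (q a - q b) = side"
  using equilateral unfolding side_def equilateral_def dist_norm
  by (auto simp: norm_minus_commute)

definition centroid :: complex where
  "centroid = (q 0 + q 1 + q 2) / 3"

lemma inner_vertex_centroid: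
  assumes j: "j \<in> {0,1,2}" and k: "k \<in> {0,1,2}"
  shows "inner (q k - q j) (centroid - q j) = (if k = j then 0 else side\<^sup>2 / 2)"
proof (cases "k = j")
  case False
  obtain c where c: "c \<in> {0,1,2}" "c \<noteq> j" "c \<noteq> k" using third_index[OF j k] False by metis
  have "q k + q j + q c = q 0 + q 1 + q 2"
    using sum_three_distinct[OF k j c(1)] False c by auto
  then have "centroid = (q k + q j + q c) / 3" unfolding centroid_def by simp
  then have "centroid - q j = (1/3) *\<^sub>R ((q k - q j) + (q c - q j))"
    by (simp add: scaleR_conv_of_real field_simps)
  then have "inner (q k - q j) (centroid - q j)
      = (1/3) * (inner (q k - q j) (q k - q j) + inner (q k - q j) (q c - q j))"
    by (simp only: inner_scaleR_right inner_add_right)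
  moreover have n: "norm (q k - q j) = side" "norm (q c - q j) = side" "norm ((q k - q j) - (q c - q j)) = side"
    using norm_vertex_diff k j c False by auto
  moreover have "inner (q k - q j) (q c - q j) = side\<^sup>2 / 2"
    using dot_norm_neg[of "q k - q j" "q c - q j"] n by simp
  ultimately show ?thesis
    using False by (simp add: power2_norm_eq_inner[symmetric])
qed simp

lemma inner_centroid_axis:
  assumes j: "j \<in> {0,1,2}"
  shows "inner (y - q j) (centroid - q j) = (1 - bary j y) * side\<^sup>2 / 2"
proof -
  have "y = bary 0 y *\<^sub>R q 0 + bary 1 y *\<^sub>R q 1 + bary 2 y *\<^sub>R q 2"
    using bary_reconstruct[of y] by (simp add: scaleR_conv_of_real)
  moreover have "q j = (bary 0 y + bary 1 y + bary 2 y) *\<^sub>R q j" using bary_sum[of y] by simp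
  ultimately have "y - q j = (\<Sum>k\<in>{0,1,2}. bary k y *\<^sub>R (q k - q j))"
    by (simp add: algebra_simps)
  then have "inner (y - q j) (centroid - q j) = (\<Sum>k\<in>{0,1,2}. bary k y * inner (q k - q j) (centroid - q j))"
    by (simp only: inner_sum_left inner_scaleR_left)
  also have "\<dots> = (\<Sum>k\<in>{0,1,2}. if k = j then 0 else bary k y * (side\<^sup>2 / 2))"
    by (intro sum.cong) (auto simp: inner_vertex_centroid[OF j])
  also have "\<dots> = (\<Sum>k\<in>{0,1,2} - {j}. bary k y) * (side\<^sup>2 / 2)"
    by (simp add: sum.If_cases sum_distrib_right Diff_eq)
  also have "(\<Sum>k\<in>{0,1,2} - {j}. bary k y) = 1 - bary j y"
    using sum.remove[of "{0,1,2}" j "\<lambda>k. bary k y"] j bary_sum[of y] by simp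
  finally show ?thesis by simp
qed

lemma bary_centroid: "k \<in> {0,1,2} \<Longrightarrow> bary k centroid = 1/3"
proof -
  assume k: "k \<in> {0,1,2}"
  have "centroid = of_real (1/3) * q 0 + of_real (2/3) * ((q 1 + q 2) / 2)"
    unfolding centroid_def by (simp add: field_simps)
  then have "bary k centroid = 1/3 * bary k (q 0) + 2/3 * bary k ((q 1 + q 2) / 2)"
    by (simp only: bary_affine[of "1/3" "2/3"])
  then have "bary k centroid = 1/3 * bary k (q 0) + 2/3 * ((bary k (q 1) + bary k (q 2)) / 2)"
    by (simp only: bary_midpoint)
  with k show ?thesis by (auto simp: bary_vertex)
qed

lemma norm_centroid_vertex: "j \<in> {0,1,2} \<Longrightarrow> sqrt 3 * norm (centroid - q j) = side"
proof -
  assume j: "j \<in> {0,1,2}"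
  have "(norm (centroid - q j))\<^sup>2 = side\<^sup>2 / 3"
    using inner_centroid_axis[OF j, of centroid] bary_centroid[OF j] by (simp add: power2_norm_eq_inner)
  then have "(sqrt 3 * norm (centroid - q j))\<^sup>2 = side\<^sup>2" by (simp add: power_mult_distrib)
  then show ?thesis using side_pos by (simp add: power2_eq_iff_nonneg)
qed

lemma sgFw_centroid: "(sgFw q w (q 0) + sgFw q w (q 1) + sgFw q w (q 2)) / 3 = sgFw q w centroid"
  unfolding centroid_def by (subst (1 2 3 4) sgFw_affine) (simp add: field_simps)

lemma height_eq: "height q w = sqrt 3 / 2 * side / 2 ^ length w"
  unfolding height_def dist_sgFw side_def by simp

text \<open>For \<open>w = u j i\<^sup>r\<close> the neighbouring cell at \<open>p\<^sub>i\<close> is \<open>C\<^bsub>u i j\<^sup>r\<^esub>\<close>, whose vertex at \<open>p\<^sub>i\<close> is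
  \<open>q\<^sub>j\<close>; so the distance along the axis is an affine function of the \<open>j\<close>-th barycentric coordinate
  in that cell, running from \<open>0\<close> at \<open>p\<^sub>i\<close> to the height on the opposite side.\<close>
lemma axis_coordinate:
  assumes w: "w \<in> words (length w)" and i: "i \<in> {0,1,2}" and j: "j \<in> {0,1,2}" and ji: "j \<noteq> i"
    and wd: "w = u @ j # replicate r i"
  shows "inner (sgFw q (u @ i # replicate r j) y - sgFw q w (q i)) (axis_vec q w i) = (1 - bary j y) * height q w"
proof -
  define v where "v = u @ i # replicate r j"
  define p where "p = sgFw q w (q i)"
  define t :: real where "t = 1 / 2 ^ length w"
  define N where "N = norm (centroid - q j)"
  have t: "t > 0" unfolding t_def by simp
  have N: "sqrt 3 * N = side" unfolding N_def using norm_centroid_vertex[OF j] .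
  then have "N \<noteq> 0" using side_pos by auto
  have p_eq: "p = sgFw q v (q j)"
    unfolding p_def v_def wd by (simp add: sgFw_append sgFw_replicate_vertex sgF_vertex_comm)
  have diff: "sgFw q v z - p = t *\<^sub>R (z - q j)" for z
    unfolding p_eq t_def v_def using sgFw_diff_scaleR[of q "u @ i # replicate r j" z "q j"] wd by simp
  have norm_diff: "norm (t *\<^sub>R (centroid - q j)) = t * N" unfolding N_def using t by simp
  have divide_eq: "x / complex_of_real c = (1 / c) *\<^sub>R x" for x c
    by (simp add: scaleR_conv_of_real divide_inverse mult.commute)
  have axis: "axis_vec q w i = (1 / (t * N)) *\<^sub>R (t *\<^sub>R (centroid - q j))"
    unfolding axis_vec_def Let_def nbr_word_eq[OF assms] v_def[symmetric] sgFw_centroid p_def[symmetric]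
      diff norm_diff divide_eq ..
  have "inner (sgFw q v y - p) (axis_vec q w i) = t * ((1 / (t * N)) * (t * inner (y - q j) (centroid - q j)))"
    unfolding diff axis by (simp only: inner_scaleR_left inner_scaleR_right mult.left_commute)
  also have "\<dots> = (1 - bary j y) * (t * side\<^sup>2 / (2 * N))"
    unfolding inner_centroid_axis[OF j] using t \<open>N \<noteq> 0\<close> by (simp add: field_simps)
  also have "t * side\<^sup>2 / (2 * N) = height q w"
    unfolding height_eq t_def N[symmetric] using \<open>N \<noteq> 0\<close> by (simp add: power2_eq_square field_simps)
  finally show ?thesis unfolding v_def p_def .
qed

lemma Eset_zero:
  assumes w: "w \<in> words (length w)" and i: "i \<in> {0,1,2}" and j: "j \<in> {0,1,2}" and ji: "j \<noteq> i"
    and wd: "w = u @ j # replicate r i"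
  shows "Eset q w i 0 \<subseteq> {sgFw q w (q i)}"
proof
  fix z assume "z \<in> Eset q w i 0"
  then obtain y where y: "y \<in> SG q" "z = sgFw q (u @ i # replicate r j) y"
    and le: "inner (z - sgFw q w (q i)) (axis_vec q w i) \<le> 0"
    unfolding Eset_def nbr_word_eq[OF assms] cell_def by auto
  have "height q w > 0" unfolding height_eq using side_pos by simp
  then have "bary j y \<ge> 1" using le axis_coordinate[OF assms, of y] y(2) by (simp add: mult_le_0_iff)
  then have "y = q j"
    using bary_le_1[of y j] bary_eq_1_imp_vertex[of y j] y(1) SG_subset_triangle j by auto
  then show "z \<in> {sgFw q w (q i)}"
    using y(2) wd by (simp add: sgFw_append sgFw_replicate_vertex sgF_vertex_comm)
qed

lemma Eset_one:
  assumes w: "w \<in> words (length w)" and i: "i \<in> {0,1,2}" and j: "j \<in> {0,1,2}" and ji: "j \<noteq> i"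
    and wd: "w = u @ j # replicate r i"
  shows "Eset q w i 1 = cell q (nbr_word q w i)"
proof -
  have bound: "inner (z - sgFw q w (q i)) (axis_vec q w i) \<le> 1 * height q w" if z: "z \<in> cell q (u @ i # replicate r j)" for z
  proof -
    obtain y where y: "y \<in> SG q" "z = sgFw q (u @ i # replicate r j) y"
      using z unfolding cell_def by auto
    then have "0 \<le> bary j y" using SG_subset_triangle j unfolding triangle_def by auto
    moreover have "height q w > 0" unfolding height_eq using side_pos by simp
    ultimately have "(1 - bary j y) * height q w \<le> 1 * height q w" by (intro mult_right_mono) auto
    then show ?thesis unfolding y(2) axis_coordinate[OF assms] .
  qed
  have "Eset q w i 1 = {z \<in> cell q (u @ i # replicate r j). inner (z - sgFw q w (q i)) (axis_vec q w i) \<le> 1 * height q w}"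
    unfolding Eset_def nbr_word_eq[OF assms] ..
  also have "\<dots> = cell q (u @ i # replicate r j)" using bound by blast
  finally show ?thesis unfolding nbr_word_eq[OF assms] .
qed

lemma Eset_zero_interior:
  assumes "w \<in> words (length w)" "cell q w \<inter> V0 q = {}" "i \<in> {0,1,2}"
  shows "Eset q w i 0 \<subseteq> cell q w"
proof -
  obtain u j r where "j \<in> {0,1,2}" "j \<noteq> i" "w = u @ j # replicate r i"
    using interior_cell_decomposition[OF assms] .
  then show ?thesis using Eset_zero[OF assms(1,3)] vertex_in_cell[OF assms(3)] by blast
qed

lemma Eset_one_interior:
  assumes "w \<in> words (length w)" "cell q w \<inter> V0 q = {}" "i \<in> {0,1,2}"
  shows "Eset q w i 1 = cell q (nbr_word q w i)"
proof -
  obtain u j r where "j \<in> {0,1,2}" "j \<noteq> i" "w = u @ j # replicate r i"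
    using interior_cell_decomposition[OF assms] .
  then show ?thesis using Eset_one[OF assms(1,3)] by blast
qed

lemma Bset_001_eq:
  assumes "w \<in> words (length w)" "cell q w \<inter> V0 q = {}"
  shows "Bset q w 0 0 1 = (\<Union>v\<in>{w, nbr_word q w 2}. cell q v)"
  using Eset_zero_interior[OF assms, of 0] Eset_zero_interior[OF assms, of 1]
    Eset_one_interior[OF assms, of 2]
  unfolding Bset_def by auto

lemma Bset_011_eq:
  assumes "w \<in> words (length w)" "cell q w \<inter> V0 q = {}"
  shows "Bset q w 0 1 1 = (\<Union>v\<in>{w, nbr_word q w 1, nbr_word q w 2}. cell q v)"
  using Eset_zero_interior[OF assms, of 0] Eset_one_interior[OF assms, of 1]
    Eset_one_interior[OF assms, of 2]
  unfolding Bset_def by auto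

end

section \<open>Integrals over cells\<close>

locale sg_measure_space = sg_triangle q for q +
  fixes \<mu> :: "complex measure"
  assumes sg_measure: "sg_measure q \<mu>"
begin

sublocale prob_space \<mu>
  using sg_measure unfolding sg_measure_def by simp

lemma sets_eq_borel: "sets \<mu> = sets borel"
  using sg_measure unfolding sg_measure_def by simp

lemma measure_cell: "w \<in> words m \<Longrightarrow> measure \<mu> (cell q w) = (1/3) ^ m"
  using sg_measure unfolding sg_measure_def by simp

lemma cell_in_sets: "cell q w \<in> sets \<mu>"
  unfolding sets_eq_borel by (intro borel_closed compact_imp_closed compact_cell)

lemma singleton_null: "{p} \<in> null_sets \<mu>"
proof -
  have sets: "{p} \<in> sets \<mu>" unfolding sets_eq_borel by (rule borel_closed) simp
  have "measure \<mu> {p} \<le> (1/3) ^ n" for n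
  proof (cases "p \<in> SG q")
    case True
    then obtain w where w: "w \<in> words n" "p \<in> cell q w" using SG_covered_by_cells by blast
    then have "measure \<mu> {p} \<le> measure \<mu> (cell q w)" by (intro finite_measure_mono cell_in_sets) auto
    then show ?thesis using measure_cell[OF w(1)] by simp
  next
    case False
    have "space \<mu> - SG q \<in> sets \<mu>" using cell_in_sets[of "[]"] by (auto simp: cell_Nil)
    then have "measure \<mu> {p} \<le> measure \<mu> (space \<mu> - SG q)"
      using False sets_eq_imp_space_eq[OF sets_eq_borel] by (intro finite_measure_mono) auto
    also have "\<dots> = 0"
      using prob_space finite_measure_compl[OF cell_in_sets[of "[]"]] measure_cell[of "[]" 0]
      by (simp add: cell_Nil words_0)
    finally show ?thesis by (rule order_trans) simp
  qed
  then have "measure \<mu> {p} = 0"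
    using real_arch_pow_inv[of "measure \<mu> {p}" "1/3"] measure_nonneg[of \<mu> "{p}"]
    by (cases "measure \<mu> {p} = 0") (auto simp: not_le[symmetric])
  then show ?thesis using sets by (intro null_setsI) (simp_all add: emeasure_eq_measure)
qed

lemma AE_not_in_both: "A \<inter> B \<subseteq> {p} \<Longrightarrow> AE x in \<mu>. \<not> (x \<in> A \<and> x \<in> B)"
  by (rule AE_I'[OF singleton_null]) auto

lemma AE_not_in_two_cells:
  "v \<in> words n \<Longrightarrow> v' \<in> words n \<Longrightarrow> v \<noteq> v' \<Longrightarrow> AE x in \<mu>. \<not> (x \<in> cell q v \<and> x \<in> cell q v')"
  using cells_inter_subset_singleton AE_not_in_both by metis

lemma set_integrable_SG:
  fixes h :: "complex \<Rightarrow> real"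
  assumes hc: "continuous_on (SG q) h" and A: "A \<in> sets \<mu>" "A \<subseteq> SG q"
  shows "set_integrable \<mu> A h"
proof -
  obtain B where B: "\<forall>x\<in>SG q. norm (h x) \<le> B"
    using compact_imp_bounded[OF compact_continuous_image[OF hc compact_SG]] unfolding bounded_iff by auto
  have Ab: "A \<in> sets borel" using A sets_eq_borel by simp
  have meas: "(\<lambda>x. indicator A x *\<^sub>R h x) \<in> borel_measurable \<mu>"
    unfolding measurable_cong_sets[OF sets_eq_borel refl]
    by (rule borel_measurable_continuous_on_indicator[OF Ab continuous_on_subset[OF hc A(2)]])
  have fin: "emeasure \<mu> A < \<infinity>" using emeasure_finite[of A] by (simp add: less_top[symmetric])
  have "AE x in \<mu>. x \<in> A \<longrightarrow> norm (indicator A x *\<^sub>R h x) \<le> B" using B A(2) by (intro AE_I2) auto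
  moreover have "AE x in \<mu>. x \<notin> A \<longrightarrow> indicator A x *\<^sub>R h x = 0" by (intro AE_I2) auto
  ultimately show ?thesis unfolding set_integrable_def
    using integrableI_bounded_set[OF A(1) meas fin] by blast
qed

lemma cells_in_words_subset_SG:
  assumes "W \<subseteq> words m"
  shows "(\<Union>v\<in>W. cell q v) \<subseteq> SG q"
proof (rule UN_least)
  fix v assume "v \<in> W"
  then have "set v \<subseteq> {0,1,2}" using assms by (auto simp: words_def)
  then show "cell q v \<subseteq> SG q" by (rule cell_subset_SG)
qed

lemma AE_not_in_cell_and_Union:
  assumes "finite W" "W \<subseteq> words m" "v \<in> words m" "v \<notin> W"
  shows "AE x in \<mu>. \<not> (x \<in> cell q v \<and> x \<in> (\<Union>v'\<in>W. cell q v'))"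
proof -
  have "AE x in \<mu>. \<forall>v'\<in>W. \<not> (x \<in> cell q v \<and> x \<in> cell q v')"
  proof (rule AE_finite_allI[OF assms(1)])
    fix v' assume "v' \<in> W"
    then show "AE x in \<mu>. \<not> (x \<in> cell q v \<and> x \<in> cell q v')"
      using assms(2-4) by (intro AE_not_in_two_cells[of v m v']) auto
  qed
  then show ?thesis by (rule AE_mp) (intro AE_I2, blast)
qed

lemma set_integral_Union_cells:
  fixes h :: "complex \<Rightarrow> real"
  assumes hc: "continuous_on (SG q) h" and W: "finite W" "W \<subseteq> words m"
  shows "(LINT x:(\<Union>v\<in>W. cell q v)|\<mu>. h x) = (\<Sum>v\<in>W. LINT x:cell q v|\<mu>. h x)"
  using W
proof (induction W rule: finite_induct)
  case (insert v W)
  let ?U = "\<Union>v\<in>W. cell q v"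
  have v: "v \<in> words m" and W: "W \<subseteq> words m" using insert.prems by auto
  have "(LINT x:cell q v \<union> ?U|\<mu>. h x) = (LINT x:cell q v|\<mu>. h x) + (LINT x:?U|\<mu>. h x)"
  proof (rule set_integral_Un_AE)
    show "AE x in \<mu>. \<not> (x \<in> cell q v \<and> x \<in> ?U)"
      using AE_not_in_cell_and_Union[OF insert.hyps(1) W v insert.hyps(2)] .
    show "cell q v \<in> sets \<mu>" "?U \<in> sets \<mu>" using insert.hyps(1) cell_in_sets by auto
    then show "set_integrable \<mu> (cell q v) h" "set_integrable \<mu> ?U h"
      using cells_in_words_subset_SG[OF W] cells_in_words_subset_SG[of "{v}"] v
      by (auto intro!: set_integrable_SG[OF hc])
  qed
  with insert show ?case by simp
qed (simp add: set_lebesgue_integral_def)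

lemma measure_Union_cells:
  assumes W: "finite W" "W \<subseteq> words m"
  shows "measure \<mu> (\<Union>v\<in>W. cell q v) = card W * (1/3) ^ m"
  using W
proof (induction W rule: finite_induct)
  case (insert v W)
  let ?U = "\<Union>v\<in>W. cell q v"
  have v: "v \<in> words m" and W: "W \<subseteq> words m" using insert.prems by auto
  have "AE x in \<mu>. x \<notin> cell q v \<or> x \<notin> ?U"
    using AE_not_in_cell_and_Union[OF insert.hyps(1) W v insert.hyps(2)] by simp
  moreover have "cell q v \<in> fmeasurable \<mu>" "?U \<in> fmeasurable \<mu>"
    using insert.hyps(1) cell_in_sets by (auto simp: fmeasurable_eq_sets)
  ultimately have "measure \<mu> (cell q v \<union> ?U) = (1/3) ^ m + card W * (1/3) ^ m"
    using measure_Un_AE measure_cell[OF v] insert.IH[OF W] by metis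
  then show ?case using insert.hyps by (simp add: algebra_simps)
qed simp

definition cell_integral :: "(complex \<Rightarrow> real) \<Rightarrow> nat list \<Rightarrow> real" where
  "cell_integral h w = (LINT x:cell q w|\<mu>. h x)"

lemma cell_integral_children:
  assumes hc: "continuous_on (SG q) h" and t: "t \<in> words n"
  shows "cell_integral h t = cell_integral h (t @ [0]) + cell_integral h (t @ [1]) + cell_integral h (t @ [2])"
proof -
  let ?W = "{t @ [0], t @ [1], t @ [2]}"
  have c: "cell q t = (\<Union>v\<in>?W. cell q v)" using cell_eq_Union_children[of q t] by simp
  have "?W \<subseteq> words (Suc n)" using t by (auto simp: words_def)
  then have "cell_integral h t = (\<Sum>v\<in>?W. cell_integral h v)"
    unfolding cell_integral_def c by (intro set_integral_Union_cells[OF hc]) auto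
  then show ?thesis by (simp add: add.assoc)
qed

lemma sum_cell_integral_words:
  assumes hc: "continuous_on (SG q) h" and t: "t \<in> words n"
  shows "(\<Sum>v\<in>words k. cell_integral h (t @ v)) = cell_integral h t"
proof (induction k)
  case (Suc k)
  have "(\<Sum>v\<in>words (Suc k). cell_integral h (t @ v))
      = (\<Sum>v\<in>words k. cell_integral h ((t @ v) @ [0]) + cell_integral h ((t @ v) @ [1]) + cell_integral h ((t @ v) @ [2]))"
    using sum_words_Suc[of "\<lambda>v. cell_integral h (t @ v)" k] by simp
  also have "\<dots> = (\<Sum>v\<in>words k. cell_integral h (t @ v))"
    using cell_integral_children[OF hc append_in_words[OF t]] by (intro sum.cong) auto
  finally show ?case using Suc by simp
qed (simp add: words_0)

lemma set_integral_near_const: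
  fixes h :: "complex \<Rightarrow> real"
  assumes hc: "continuous_on (SG q) h" and A: "A \<in> sets \<mu>" "A \<subseteq> SG q"
    and near: "\<And>x. x \<in> A \<Longrightarrow> \<bar>h x - c\<bar> \<le> e"
  shows "\<bar>(LINT x:A|\<mu>. h x) - measure \<mu> A * c\<bar> \<le> measure \<mu> A * e"
proof -
  have fin: "emeasure \<mu> A < \<infinity>" using emeasure_finite[of A] by (simp add: less_top[symmetric])
  have const: "set_integrable \<mu> A (\<lambda>_. d)" for d :: real
    unfolding set_integrable_def using A(1) fin by (rule integrable_indicator)
  have const_int: "(LINT x:A|\<mu>. d) = measure \<mu> A * d" for d :: real
    using set_integral_const[OF A(1), of d] fin by simp
  have hi: "set_integrable \<mu> A h" by (rule set_integrable_SG[OF hc A])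
  have "(LINT x:A|\<mu>. c - e) \<le> (LINT x:A|\<mu>. h x)"
    by (intro set_integral_mono[OF const hi]) (auto dest!: near simp: abs_le_iff)
  moreover have "(LINT x:A|\<mu>. h x) \<le> (LINT x:A|\<mu>. c + e)"
    by (intro set_integral_mono[OF hi const]) (auto dest!: near simp: abs_le_iff)
  ultimately show ?thesis unfolding const_int by (simp add: abs_le_iff algebra_simps)
qed

text \<open>Both sides are additive under subdivision (the right one by the \<open>2/5\<close>-rule), and on
  small cells the integrand is uniformly close to the vertex average.\<close>
lemma cell_integral_harmonic:
  assumes harm: "harmonic q h" and t: "t \<in> words m"
  shows "cell_integral h t = (1/3) ^ m * vertex_sum h t / 3"
proof -
  have hc: "continuous_on (SG q) h" using harm unfolding harmonic_def by simp
  have approx: "\<bar>cell_integral h t - (1/3) ^ m * vertex_sum h t / 3\<bar> \<le> (1/3) ^ m * e" if e: "e > 0" for e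
  proof -
    obtain k where k: "\<And>n w z. n \<ge> k \<Longrightarrow> w \<in> words n \<Longrightarrow> z \<in> cell q w \<Longrightarrow>
        \<bar>h z - vertex_sum h w / 3\<bar> \<le> e"
      using small_cells_near_vertex_mean[OF hc e] by blast
    have each: "\<bar>cell_integral h (t @ v) - (1/3) ^ (m + k) * (vertex_sum h (t @ v) / 3)\<bar> \<le> (1/3) ^ (m + k) * e"
      if v: "v \<in> words k" for v
    proof -
      have tv: "t @ v \<in> words (m + k)" using append_in_words[OF t v] .
      then have "cell q (t @ v) \<subseteq> SG q" by (intro cell_subset_SG) (simp add: words_def)
      from set_integral_near_const[OF hc cell_in_sets this k[OF _ tv]]
      show ?thesis unfolding cell_integral_def measure_cell[OF tv] by simp
    qed
    have pw: "(1/3::real) ^ (m + k) * 3 ^ k = (1/3) ^ m" by (simp add: power_add field_simps)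
    have "\<bar>cell_integral h t - (1/3) ^ m * vertex_sum h t / 3\<bar>
        = \<bar>\<Sum>v\<in>words k. cell_integral h (t @ v) - (1/3) ^ (m + k) * (vertex_sum h (t @ v) / 3)\<bar>"
      unfolding sum_subtractf sum_cell_integral_words[OF hc t] sum_distrib_left[symmetric]
        sum_divide_distrib[symmetric] sum_vertex_sum_words[OF harm t]
      by (simp add: pw[symmetric])
    also have "\<dots> \<le> (\<Sum>v\<in>words k. (1/3) ^ (m + k) * e)"
      using each by (intro order_trans[OF sum_abs] sum_mono) auto
    also have "\<dots> = (1/3) ^ m * e" using pw by (simp add: card_words algebra_simps)
    finally show ?thesis .
  qed
  show ?thesis
  proof (rule ccontr)
    define d where "d = \<bar>cell_integral h t - (1/3) ^ m * vertex_sum h t / 3\<bar>"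
    assume "cell_integral h t \<noteq> (1/3) ^ m * vertex_sum h t / 3"
    then have "d > 0" unfolding d_def by simp
    then have "d \<le> (1/3) ^ m * (d / (2 * (1/3) ^ m))"
      using approx[of "d / (2 * (1/3) ^ m)"] unfolding d_def by simp
    with \<open>d > 0\<close> show False by simp
  qed
qed

lemma cell_integral_nbr_word:
  assumes harm: "harmonic q h"
    and w: "w \<in> words (length w)" and interior: "cell q w \<inter> V0 q = {}" and i: "i \<in> {0,1,2}"
  shows "cell_integral h w + cell_integral h (nbr_word q w i) = 2 * (1/3) ^ length w * h (sgFw q w (q i))"
proof -
  obtain u j r where d: "j \<in> {0,1,2}" "j \<noteq> i" "w = u @ j # replicate r i"
    using interior_cell_decomposition[OF w interior i] .
  have u: "u \<in> words (length u)" using w d(3) by (auto simp: words_def)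
  have "cell_integral h w + cell_integral h (nbr_word q w i)
      = (1/3) ^ length w * (vertex_sum h w + vertex_sum h (u @ i # replicate r j)) / 3"
    using cell_integral_harmonic[OF harm w] cell_integral_harmonic[OF harm nbr_word_in_words(1)[OF w interior i]]
    unfolding nbr_word_eq[OF w i d] by (simp add: field_simps)
  also have "vertex_sum h w + vertex_sum h (u @ i # replicate r j) = 6 * h (sgFw q w (q i))"
    using vertex_sum_neighbours[OF harm u i d(1) d(2)[symmetric], of r] d(3)
    by (simp add: sgFw_append sgFw_replicate_vertex)
  finally show ?thesis by simp
qed

lemma mean_val_Union_cells:
  assumes hc: "continuous_on (SG q) h" and W: "finite W" "W \<subseteq> words m"
  shows "mean_val \<mu> (\<Union>v\<in>W. cell q v) h = (\<Sum>v\<in>W. cell_integral h v) / (card W * (1/3) ^ m)"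
  unfolding mean_val_def cell_integral_def set_integral_Union_cells[OF hc W] measure_Union_cells[OF W]
  by simp

end

theorem lemma3p3:
  fixes q :: "nat \<Rightarrow> complex" and \<mu> :: "complex measure"
    and w :: "nat list" and h :: "complex \<Rightarrow> real"
  assumes "equilateral q"
    and "sg_measure q \<mu>"
    and "w \<in> words (length w)"
    and "cell q w \<inter> V0 q = {}"
    and "harmonic q h"
  shows "mean_val \<mu> (Bset q w 0 0 1) h = h (sgFw q w (q 2))
    \<and> mean_val \<mu> (Bset q w 0 1 1) h =
           - (1/9) * h (sgFw q w (q 0)) + (5/9) * h (sgFw q w (q 1)) + (5/9) * h (sgFw q w (q 2))"
proof -
  interpret sg_equilateral q by unfold_locales fact
  interpret sg_measure_space q \<mu> by unfold_locales fact
  note interior = assms(3,4) and harm = assms(5)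
  define m where "m = length w"
  let ?n = "nbr_word q w" and ?I = "cell_integral h" and ?c = "(1/3::real) ^ m"
  have hc: "continuous_on (SG q) h" using harm by (simp add: harmonic_def)
  have W: "{w, ?n 2} \<subseteq> words m" "{w, ?n 1, ?n 2} \<subseteq> words m"
    using nbr_word_in_words(1)[OF interior] interior(1) by (auto simp: m_def)
  have ne: "?n 1 \<noteq> w" "?n 2 \<noteq> w" "?n 1 \<noteq> ?n 2"
    using nbr_word_in_words(2)[OF interior] nbr_word_inj[OF interior, of 1 2] by auto
  have pairs: "?I w + ?I (?n 1) = 2 * ?c * h (sgFw q w (q 1))" "?I w + ?I (?n 2) = 2 * ?c * h (sgFw q w (q 2))"
    using cell_integral_nbr_word[OF harm interior] by (simp_all add: m_def)
  have "?I w = ?c * vertex_sum h w / 3"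
    using cell_integral_harmonic[OF harm interior(1)] by (simp add: m_def)
  have "mean_val \<mu> (Bset q w 0 0 1) h = (?c * (2 * h (sgFw q w (q 2)))) / (?c * 2)"
    using mean_val_Union_cells[OF hc _ W(1)] ne pairs(2) by (simp add: Bset_001_eq[OF interior] ac_simps)
  moreover have "mean_val \<mu> (Bset q w 0 1 1) h
      = (?c * (2 * h (sgFw q w (q 1)) + 2 * h (sgFw q w (q 2)) - vertex_sum h w / 3)) / (?c * 3)"
    using mean_val_Union_cells[OF hc _ W(2)] ne pairs \<open>?I w = _\<close>
    by (simp add: Bset_011_eq[OF interior] algebra_simps)
  ultimately show ?thesis unfolding mult_divide_mult_cancel_left_if vertex_sum_def by (simp add: field_simps)
qed

end
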